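(* Let $\mathcal E$ be a nonlinear Dirichlet form on $L^2(\mu)$. The following are equivalent: (i) $\ker\|\cdot\|_{L_e}=\{0\}$; (ii) $(M(\mathcal E_e),\|\cdot\|_{L_e})$ is a Banach space; (iii) the embedding $(M(\mathcal E_e),\|\cdot\|_{L_e})\to L^0(\mu)$, $f\mapsto f$, is continuous; (iv) for one (equivalently, for all) integrable $w\colon X\to(0,\infty)$ and one (equivalently, all) $1\le p<\infty$ there exists a decreasing function $\alpha\colon(0,\infty)\to(0,\infty)$ such that for all $r>0$ and all $f\in M(\mathcal E_e)\cap L^\infty(\mu)$: $\left(\int_X|f|^pw\,d\mu\right)^{1/p}\le\alpha(r)\|f\|_{L_e}+r\|f\|_\infty$.
   Context: $(X,\mathfrak A,\mu)$ is $\sigma$-finite; $L^0(\mu)$ carries the topology of local convergence in measure. A nonlinear Dirichlet form is a lower semicontinuous convex $\mathcal E\colon L^2(\mu)\to[0,\infty]$ with $\mathcal E(-f)=\mathcal E(f)$, $\mathcal E(0)=0$, such that $\mathcal E(f+Cg)+\mathcal E(f-Cg)\le\mathcal E(f+g)+\mathcal E(f-g)$ for all $f,g$ and every 1-Lipschitz $C\colon\mathbb R\to\mathbb R$ with $C(0)=0$. $\mathcal E_e$ is the lower semicontinuous relaxation on $L^0(\mu)$ (w.r.t. local convergence in measure) of $\mathcal E$ extended by $+\infty$ outside $L^2(\mu)$ (it exists for such $\mathcal E$); $M(\mathcal E_e)=\{f\in L^0:\lim_{\lambda\to0+}\mathcal E_e(\lambda f)=0\}$, $\|f\|_{L_e}=\inf\{\lambda>0:\mathcal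 E_e(\lambda^{-1}f)\le1\}$. *)

theory Defs
  imports "HOL-Analysis.Analysis" "HOL-Probability.Essential_Supremum"
begin

text \<open>Elements of L^0, L^2, L^infinity are represented by real-valued measurable
  functions; equality in these spaces is equality almost everywhere.\<close>

definition L2 :: "'a measure \<Rightarrow> ('a \<Rightarrow> real) set" where
  "L2 M = {f. f \<in> borel_measurable M \<and> integrable M (\<lambda>x. (f x)\<^sup>2)}"

definition Linf :: "'a measure \<Rightarrow> ('a \<Rightarrow> real) set" where
  "Linf M = {f. f \<in> borel_measurable M \<and> (\<exists>C. AE x in M. \<bar>f x\<bar> \<le> C)}"

definition sup_norm :: "'a measure \<Rightarrow> ('a \<Rightarrow> real) \<Rightarrow> real" where
  "sup_norm M f = real_of_ereal (esssup M (\<lambda>x. ereal \<bar>f x\<bar>))"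

definition loc_conv_in_measure :: "'a measure \<Rightarrow> (nat \<Rightarrow> 'a \<Rightarrow> real) \<Rightarrow> ('a \<Rightarrow> real) \<Rightarrow> bool" where
  "loc_conv_in_measure M g f \<longleftrightarrow>
     (\<forall>A \<in> sets M. emeasure M A < \<infinity> \<longrightarrow>
        (\<forall>\<epsilon>>0. (\<lambda>n. emeasure M ({x \<in> space M. \<epsilon> < \<bar>g n x - f x\<bar>} \<inter> A)) \<longlonglongrightarrow> 0))"

text \<open>Nonlinear Dirichlet form on L^2(M); the functional is given on functions and
  only its values on L2 M matter.\<close>
definition nonlinear_dirichlet_form :: "'a measure \<Rightarrow> (('a \<Rightarrow> real) \<Rightarrow> ennreal) \<Rightarrow> bool" where
  "nonlinear_dirichlet_form M E \<longleftrightarrow>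
     \<comment> \<open>well defined on equivalence classes\<close>
     (\<forall>f \<in> L2 M. \<forall>g \<in> L2 M. (AE x in M. f x = g x) \<longrightarrow> E f = E g) \<and>
     \<comment> \<open>lower semicontinuous w.r.t. the L2 norm\<close>
     (\<forall>u f. (\<forall>n. u n \<in> L2 M) \<and> f \<in> L2 M \<and>
        (\<lambda>n. integral\<^sup>L M (\<lambda>x. (u n x - f x)\<^sup>2)) \<longlonglongrightarrow> 0 \<longrightarrow>
        E f \<le> liminf (\<lambda>n. E (u n))) \<and>
     \<comment> \<open>convex\<close>
     (\<forall>f \<in> L2 M. \<forall>g \<in> L2 M. \<forall>t::real. 0 \<le> t \<and> t \<le> 1 \<longrightarrow>
        E (\<lambda>x. t * f x + (1 - t) * g x) \<le> ennreal t * E f + ennreal (1 - t) * E g) \<and>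
     \<comment> \<open>symmetric, vanishing at 0\<close>
     (\<forall>f \<in> L2 M. E (\<lambda>x. - f x) = E f) \<and>
     E (\<lambda>x. 0) = 0 \<and>
     \<comment> \<open>contraction property for normal contractions\<close>
     (\<forall>f \<in> L2 M. \<forall>g \<in> L2 M. \<forall>C :: real \<Rightarrow> real.
        (\<forall>s t. \<bar>C s - C t\<bar> \<le> \<bar>s - t\<bar>) \<and> C 0 = 0 \<longrightarrow>
        E (\<lambda>x. f x + C (g x)) + E (\<lambda>x. f x - C (g x))
          \<le> E (\<lambda>x. f x + g x) + E (\<lambda>x. f x - g x))"

definition E_ext :: "'a measure \<Rightarrow> (('a \<Rightarrow> real) \<Rightarrow> ennreal) \<Rightarrow> ('a \<Rightarrow> real) \<Rightarrow> ennreal" where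
  "E_ext M E f = (if f \<in> L2 M then E f else \<infinity>)"

text \<open>Lower semicontinuous relaxation on L^0 w.r.t. local convergence in measure.
  Since M is sigma-finite this topology is metrizable, so the relaxation is
  the sequential one.\<close>
definition E_e :: "'a measure \<Rightarrow> (('a \<Rightarrow> real) \<Rightarrow> ennreal) \<Rightarrow> ('a \<Rightarrow> real) \<Rightarrow> ennreal" where
  "E_e M E f = Inf {liminf (\<lambda>n. E_ext M E (g n)) | g.
      (\<forall>n. g n \<in> borel_measurable M) \<and> loc_conv_in_measure M g f}"

definition ME :: "'a measure \<Rightarrow> (('a \<Rightarrow> real) \<Rightarrow> ennreal) \<Rightarrow> ('a \<Rightarrow> real) set" where
  "ME M E = {f. f \<in> borel_measurable M \<and>
      ((\<lambda>l::real. E_e M E (\<lambda>x. l * f x)) \<longlongrightarrow> 0) (at_right 0)}"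

definition Le_norm :: "'a measure \<Rightarrow> (('a \<Rightarrow> real) \<Rightarrow> ennreal) \<Rightarrow> ('a \<Rightarrow> real) \<Rightarrow> real" where
  "Le_norm M E f = Inf {l::real. l > 0 \<and> E_e M E (\<lambda>x. f x / l) \<le> 1}"

definition trivial_kernel :: "'a measure \<Rightarrow> (('a \<Rightarrow> real) \<Rightarrow> ennreal) \<Rightarrow> bool" where
  "trivial_kernel M E \<longleftrightarrow> (\<forall>f \<in> ME M E. Le_norm M E f = 0 \<longrightarrow> (AE x in M. f x = 0))"

definition is_banach :: "'a measure \<Rightarrow> (('a \<Rightarrow> real) \<Rightarrow> ennreal) \<Rightarrow> bool" where
  "is_banach M E \<longleftrightarrow>
     (let S = ME M E; N = Le_norm M E in
       (\<forall>f \<in> S. \<forall>g \<in> S. (\<lambda>x. f x + g x) \<in> S \<and> N (\<lambda>x. f x + g x) \<le> N f + N g) \<and>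
       (\<forall>f \<in> S. \<forall>c::real. (\<lambda>x. c * f x) \<in> S \<and> N (\<lambda>x. c * f x) = \<bar>c\<bar> * N f) \<and>
       (\<forall>f \<in> S. N f = 0 \<longrightarrow> (AE x in M. f x = 0)) \<and>
       (\<forall>u. (\<forall>n. u n \<in> S) \<and>
          (\<forall>\<epsilon>>0. \<exists>K. \<forall>m\<ge>K. \<forall>n\<ge>K. N (\<lambda>x. u m x - u n x) < \<epsilon>) \<longrightarrow>
          (\<exists>f \<in> S. (\<lambda>n. N (\<lambda>x. u n x - f x)) \<longlonglongrightarrow> 0)))"

text \<open>(iii) continuity of the embedding into L^0 (the domain is pseudometrizable,
  so sequential continuity is continuity).\<close>
definition embedding_continuous :: "'a measure \<Rightarrow> (('a \<Rightarrow> real) \<Rightarrow> ennreal) \<Rightarrow> bool" where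
  "embedding_continuous M E \<longleftrightarrow>
     (\<forall>u f. (\<forall>n. u n \<in> ME M E) \<and> f \<in> ME M E \<and>
        (\<lambda>n. Le_norm M E (\<lambda>x. u n x - f x)) \<longlonglongrightarrow> 0 \<longrightarrow> loc_conv_in_measure M u f)"

definition admissible_weight :: "'a measure \<Rightarrow> ('a \<Rightarrow> real) \<Rightarrow> bool" where
  "admissible_weight M w \<longleftrightarrow> integrable M w \<and> (\<forall>x \<in> space M. 0 < w x)"

definition weighted_estimate :: "'a measure \<Rightarrow> (('a \<Rightarrow> real) \<Rightarrow> ennreal) \<Rightarrow> ('a \<Rightarrow> real) \<Rightarrow> real \<Rightarrow> bool" where
  "weighted_estimate M E w p \<longleftrightarrow>
     (\<exists>\<alpha> :: real \<Rightarrow> real.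
        (\<forall>r>0. 0 < \<alpha> r) \<and> (\<forall>r s. 0 < r \<and> r \<le> s \<longrightarrow> \<alpha> s \<le> \<alpha> r) \<and>
        (\<forall>r>0. \<forall>f \<in> ME M E \<inter> Linf M.
           (integral\<^sup>L M (\<lambda>x. \<bar>f x\<bar> powr p * w x)) powr (1 / p)
             \<le> \<alpha> r * Le_norm M E f + r * sup_norm M f))"

end

theory Submission
  imports Defs
begin

text \<open>Everything rests on one consequence of (i): \<open>[0, 1]\<close>-valued functions of small Luxemburg
  norm have small weighted integral. This uses that the energy of a maximum is at most the sum
  of the energies and that the relaxation is lower semicontinuous. Applied to truncations of
  \<open>f / \<parallel>f\<parallel>\<^sub>\<infinity>\<close> it gives (iv). For \<open>p = 1\<close>, (iv) bounds \<open>\<integral> min(|f|, 1) w\<close> by the norm. This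
  gives the continuity (iii) of the embedding, and makes a fast Cauchy subsequence converge
  almost everywhere, so that the lower semicontinuity of the norm yields the completeness (ii).
  Conversely, each of (ii), (iii), (iv) forces functions of norm zero to vanish.\<close>

section \<open>Local convergence in measure\<close>

lemma loc_conv_in_measure_const: "loc_conv_in_measure M (\<lambda>n. f) f"
  unfolding loc_conv_in_measure_def by auto

lemma loc_conv_in_measure_by_bound2:
  assumes g: "loc_conv_in_measure M g f" and h: "loc_conv_in_measure M h k"
    and mg: "\<And>n. g n \<in> borel_measurable M" and mf: "f \<in> borel_measurable M"
    and mh: "\<And>n. h n \<in> borel_measurable M" and mk: "k \<in> borel_measurable M"
    and bd: "\<And>n x. x \<in> space M \<Longrightarrow> \<bar>u n x - v x\<bar> \<le> \<bar>g n x - f x\<bar> + \<bar>h n x - k x\<bar>"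
  shows "loc_conv_in_measure M u v"
  unfolding loc_conv_in_measure_def
proof (intro ballI impI allI)
  fix A \<epsilon> assume A: "A \<in> sets M" "emeasure M A < \<infinity>" and e: "(0::real) < \<epsilon>"
  define B where "B n = {x \<in> space M. \<epsilon>/2 < \<bar>g n x - f x\<bar>} \<inter> A" for n
  define C where "C n = {x \<in> space M. \<epsilon>/2 < \<bar>h n x - k x\<bar>} \<inter> A" for n
  have e2: "0 < \<epsilon>/2" using e by simp
  have "(\<lambda>n. emeasure M (B n)) \<longlonglongrightarrow> 0" "(\<lambda>n. emeasure M (C n)) \<longlonglongrightarrow> 0"
    unfolding B_def C_def
    using g[unfolded loc_conv_in_measure_def, rule_format, OF A e2]
      h[unfolded loc_conv_in_measure_def, rule_format, OF A e2] .
  then have lim: "(\<lambda>n. emeasure M (B n) + emeasure M (C n)) \<longlonglongrightarrow> 0"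
    using tendsto_add[of _ 0 _ _ 0] by fastforce
  have BC: "B n \<in> sets M" "C n \<in> sets M" for n
    unfolding B_def C_def using A mg mf mh mk by auto
  have le: "emeasure M ({x \<in> space M. \<epsilon> < \<bar>u n x - v x\<bar>} \<inter> A) \<le> emeasure M (B n) + emeasure M (C n)"
    for n
  proof -
    have "{x \<in> space M. \<epsilon> < \<bar>u n x - v x\<bar>} \<inter> A \<subseteq> B n \<union> C n"
    proof
      fix x assume x: "x \<in> {x \<in> space M. \<epsilon> < \<bar>u n x - v x\<bar>} \<inter> A"
      then have "\<epsilon> < \<bar>g n x - f x\<bar> + \<bar>h n x - k x\<bar>" using bd[of x n] by auto
      then show "x \<in> B n \<union> C n" using x unfolding B_def C_def by auto
    qed
    then have "emeasure M ({x \<in> space M. \<epsilon> < \<bar>u n x - v x\<bar>} \<inter> A) \<le> emeasure M (B n \<union> C n)"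
      by (intro emeasure_mono) (use BC in auto)
    also have "\<dots> \<le> emeasure M (B n) + emeasure M (C n)"
      by (intro emeasure_subadditive BC)
    finally show ?thesis .
  qed
  show "(\<lambda>n. emeasure M ({x \<in> space M. \<epsilon> < \<bar>u n x - v x\<bar>} \<inter> A)) \<longlonglongrightarrow> 0"
    by (rule tendsto_sandwich[OF _ _ tendsto_const lim]) (use le in auto)
qed

lemma loc_conv_in_measure_by_bound:
  assumes "loc_conv_in_measure M g f"
    and "\<And>n. g n \<in> borel_measurable M" and "f \<in> borel_measurable M"
    and "\<And>n x. x \<in> space M \<Longrightarrow> \<bar>u n x - v x\<bar> \<le> \<bar>g n x - f x\<bar>"
  shows "loc_conv_in_measure M u v"
  by (rule loc_conv_in_measure_by_bound2[OF assms(1) loc_conv_in_measure_const[of M "\<lambda>x. 0"] assms(2,3)])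
    (use assms(4) in auto)

lemma loc_conv_in_measure_subseq:
  assumes "loc_conv_in_measure M g f" "strict_mono r"
  shows "loc_conv_in_measure M (\<lambda>n. g (r n)) f"
  using assms unfolding loc_conv_in_measure_def
  by (auto intro: LIMSEQ_subseq_LIMSEQ[unfolded comp_def])

lemma AE_tendsto_imp_loc_conv_in_measure:
  assumes mg: "\<And>n. g n \<in> borel_measurable M" and mf: "f \<in> borel_measurable M"
    and ae: "AE x in M. (\<lambda>n. g n x) \<longlonglongrightarrow> f x"
  shows "loc_conv_in_measure M g f"
  unfolding loc_conv_in_measure_def
proof (intro ballI impI allI)
  fix A \<epsilon> assume A: "A \<in> sets M" "emeasure M A < \<infinity>" and e: "(0::real) < \<epsilon>"
  define B where "B n = {x \<in> space M. \<epsilon> < \<bar>g n x - f x\<bar>} \<inter> A" for n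
  define T where "T n = (\<Union>m\<in>{n..}. B m)" for n
  have Bs: "B n \<in> sets M" for n unfolding B_def using A mg mf by auto
  have Ts: "T n \<in> sets M" for n unfolding T_def using Bs by auto
  have "T n \<subseteq> A" for n unfolding T_def B_def by auto
  then have fin: "emeasure M (T n) \<noteq> \<infinity>" for n
    using A emeasure_mono[of "T n" A M] by (auto simp: top_unique less_top)
  have dec: "decseq T" unfolding T_def decseq_def by (auto 0 3 intro: order_trans)
  have lim: "(\<lambda>n. emeasure M (T n)) \<longlonglongrightarrow> emeasure M (\<Inter>n. T n)"
    by (rule Lim_emeasure_decseq) (use Ts dec fin in auto)
  from ae obtain N where N: "N \<in> null_sets M" "{x \<in> space M. \<not> (\<lambda>n. g n x) \<longlonglongrightarrow> f x} \<subseteq> N"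
    by (auto elim!: AE_E)
  have "(\<Inter>n. T n) \<subseteq> N"
  proof
    fix x assume x: "x \<in> (\<Inter>n. T n)"
    have "\<not> (\<lambda>n. g n x) \<longlonglongrightarrow> f x"
    proof
      assume "(\<lambda>n. g n x) \<longlonglongrightarrow> f x"
      then obtain n0 where n0: "\<And>n. n \<ge> n0 \<Longrightarrow> \<bar>g n x - f x\<bar> < \<epsilon>"
        using e by (auto simp: tendsto_iff eventually_sequentially dist_real_def)
      from x obtain m where "m \<ge> n0" "x \<in> B m" unfolding T_def by auto
      then show False using n0[of m] unfolding B_def by auto
    qed
    then show "x \<in> N" using N x unfolding T_def B_def by auto
  qed
  then have "(\<Inter>n. T n) \<in> null_sets M"
    by (intro null_sets_subset[OF N(1)]) (use Ts in auto)
  then have "emeasure M (\<Inter>n. T n) = 0" by auto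
  with lim have T0: "(\<lambda>n. emeasure M (T n)) \<longlonglongrightarrow> 0" by simp
  have "emeasure M (B n) \<le> emeasure M (T n)" for n
    by (rule emeasure_mono) (auto simp: T_def Ts[unfolded T_def])
  then show "(\<lambda>n. emeasure M ({x \<in> space M. \<epsilon> < \<bar>g n x - f x\<bar>} \<inter> A)) \<longlonglongrightarrow> 0"
    unfolding B_def[symmetric] by (intro tendsto_sandwich[OF _ _ tendsto_const T0]) auto
qed

lemma loc_conv_in_measure_diagonal:
  assumes A: "range A \<subseteq> sets M" "(\<Union>i. A i) = space M" "\<And>i. emeasure M (A i) \<noteq> \<infinity>" "incseq A"
    and G: "\<And>k. G k \<in> borel_measurable M" and h: "\<And>k. h k \<in> borel_measurable M"
    and small: "\<And>k. emeasure M ({x \<in> space M. inverse (real (Suc k)) < \<bar>G k x - h k x\<bar>} \<inter> A k)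
                    < ennreal (inverse (real (Suc k)))"
  shows "loc_conv_in_measure M (\<lambda>k x. G k x - h k x) (\<lambda>x. 0)"
  unfolding loc_conv_in_measure_def
proof (intro ballI impI allI)
  fix B \<epsilon> assume B: "B \<in> sets M" "emeasure M B < \<infinity>" and e: "(0::real) < \<epsilon>"
  define R where "R k = B - A k" for k
  have Rs: "R k \<in> sets M" for k unfolding R_def using A(1) B(1) by auto
  have "R k \<subseteq> B" for k unfolding R_def by auto
  then have Rfin: "emeasure M (R k) \<noteq> \<infinity>" for k
    using B emeasure_mono[of "R k" B M] by (auto simp: top_unique less_top)
  have Rdec: "decseq R" unfolding R_def decseq_def using A(4) by (auto simp: incseq_def)
  have "(\<lambda>k. emeasure M (R k)) \<longlonglongrightarrow> emeasure M (\<Inter>k. R k)"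
    by (rule Lim_emeasure_decseq) (use Rs Rdec Rfin in auto)
  moreover have "(\<Inter>k. R k) = {}"
    using A(2) sets.sets_into_space[OF B(1)] unfolding R_def by auto
  ultimately have R0: "(\<lambda>k. emeasure M (R k)) \<longlonglongrightarrow> 0" by simp
  have "(\<lambda>k. ennreal (inverse (real (Suc k)))) \<longlonglongrightarrow> ennreal 0"
    by (intro tendsto_ennrealI LIMSEQ_inverse_real_of_nat)
  from tendsto_add[OF this R0]
  have lim: "(\<lambda>k. ennreal (inverse (real (Suc k))) + emeasure M (R k)) \<longlonglongrightarrow> 0" by simp
  have "eventually (\<lambda>k. inverse (real (Suc k)) < \<epsilon>) sequentially"
    using order_tendstoD(2)[OF LIMSEQ_inverse_real_of_nat e] .
  then have "eventually (\<lambda>k. emeasure M ({x \<in> space M. \<epsilon> < \<bar>G k x - h k x - 0\<bar>} \<inter> B)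
        \<le> ennreal (inverse (real (Suc k))) + emeasure M (R k)) sequentially"
  proof (rule eventually_mono)
    fix k assume k: "inverse (real (Suc k)) < \<epsilon>"
    define S where "S = {x \<in> space M. inverse (real (Suc k)) < \<bar>G k x - h k x\<bar>} \<inter> A k"
    have Ss: "S \<in> sets M" unfolding S_def using G h A(1) by auto
    have "{x \<in> space M. \<epsilon> < \<bar>G k x - h k x - 0\<bar>} \<inter> B \<subseteq> S \<union> R k"
      unfolding S_def R_def using k by auto
    then have "emeasure M ({x \<in> space M. \<epsilon> < \<bar>G k x - h k x - 0\<bar>} \<inter> B) \<le> emeasure M (S \<union> R k)"
      by (intro emeasure_mono) (use Ss Rs in auto)
    also have "\<dots> \<le> emeasure M S + emeasure M (R k)" by (intro emeasure_subadditive Ss Rs)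
    also have "\<dots> \<le> ennreal (inverse (real (Suc k))) + emeasure M (R k)"
      using small[of k] unfolding S_def by (intro add_mono) auto
    finally show "emeasure M ({x \<in> space M. \<epsilon> < \<bar>G k x - h k x - 0\<bar>} \<inter> B)
        \<le> ennreal (inverse (real (Suc k))) + emeasure M (R k)" .
  qed
  from tendsto_sandwich[OF _ this tendsto_const lim]
  show "(\<lambda>k. emeasure M ({x \<in> space M. \<epsilon> < \<bar>G k x - h k x - 0\<bar>} \<inter> B)) \<longlonglongrightarrow> 0"
    by simp
qed

lemma (in sigma_finite_measure) loc_conv_in_measure_const_zero_imp_AE:
  assumes mf: "f \<in> borel_measurable M" and lc: "loc_conv_in_measure M (\<lambda>n. f) (\<lambda>x. 0)"
  shows "AE x in M. f x = 0"
proof -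
  obtain A :: "nat \<Rightarrow> 'a set" where A: "range A \<subseteq> sets M" "(\<Union>i. A i) = space M"
    "\<And>i. emeasure M (A i) \<noteq> \<infinity>"
    using sigma_finite by metis
  define S where "S j k = {x \<in> space M. inverse (real (Suc k)) < \<bar>f x\<bar>} \<inter> A j" for j k
  have "S j k \<in> null_sets M" for j k
  proof -
    have "(\<lambda>n. emeasure M (S j k)) \<longlonglongrightarrow> 0"
      using lc A(1) A(3)[of j] unfolding loc_conv_in_measure_def S_def by (auto simp: less_top)
    moreover have "S j k \<in> sets M" unfolding S_def using A(1) mf by auto
    ultimately show ?thesis by (auto simp: LIMSEQ_const_iff intro: null_setsI)
  qed
  then have "AE x in M. \<forall>j k. x \<notin> S j k"
    by (simp add: AE_not_in AE_all_countable)
  then show ?thesis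
  proof (rule AE_mp[OF _ AE_I2], intro impI)
    fix x assume x: "x \<in> space M" and "\<forall>j k. x \<notin> S j k"
    moreover obtain j where "x \<in> A j" using A(2) x by auto
    moreover have "f x \<noteq> 0 \<Longrightarrow> \<exists>k. inverse (real (Suc k)) < \<bar>f x\<bar>"
      using reals_Archimedean[of "\<bar>f x\<bar>"] by auto
    ultimately show "f x = 0" unfolding S_def by blast
  qed
qed

lemma emeasure_weight_le_tendsto_0:
  assumes wm: "w \<in> borel_measurable M" and wpos: "\<And>x. x \<in> space M \<Longrightarrow> 0 < w x"
    and A: "A \<in> sets M" "emeasure M A < \<infinity>"
  shows "(\<lambda>j. emeasure M ({x \<in> space M. w x \<le> inverse (real (Suc j))} \<inter> A)) \<longlonglongrightarrow> 0"
proof -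
  define D where "D j = {x \<in> space M. w x \<le> inverse (real (Suc j))} \<inter> A" for j
  have Ds: "D j \<in> sets M" for j unfolding D_def using wm A(1) by measurable
  have "D j \<subseteq> A" for j unfolding D_def by auto
  then have Dfin: "emeasure M (D j) \<noteq> \<infinity>" for j
    using A emeasure_mono[of "D j" A M] by (auto simp: top_unique less_top)
  have "inverse (real (Suc n)) \<le> inverse (real (Suc m))" if "m \<le> n" for m n
    using that by (simp add: le_imp_inverse_le)
  then have "decseq D" unfolding D_def decseq_def by (auto intro: order_trans)
  then have "(\<lambda>j. emeasure M (D j)) \<longlonglongrightarrow> emeasure M (\<Inter>j. D j)"
    by (intro Lim_emeasure_decseq) (use Ds Dfin in auto)
  moreover have "(\<Inter>j. D j) = {}"
  proof (rule ccontr)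
    assume "(\<Inter>j. D j) \<noteq> {}"
    then obtain x where x: "\<And>j. x \<in> D j" by auto
    then have "x \<in> space M" unfolding D_def by auto
    then obtain j where "inverse (real (Suc j)) < w x" using reals_Archimedean[OF wpos] by auto
    then show False using x[of j] unfolding D_def by auto
  qed
  ultimately show ?thesis unfolding D_def by simp
qed

text \<open>Where the weight is small we use that the set is small, elsewhere Markov's inequality.\<close>

lemma emeasure_level_set_le_weighted_Markov:
  fixes w g :: "'a \<Rightarrow> real"
  assumes wm: "w \<in> borel_measurable M" and w0: "\<And>x. x \<in> space M \<Longrightarrow> 0 \<le> w x"
    and gm: "g \<in> borel_measurable M" and g0: "\<And>x. 0 \<le> g x" and gi: "integrable M (\<lambda>x. g x * w x)"
    and e: "0 < \<epsilon>" and \<eta>: "0 < \<eta>" and A: "A \<in> sets M"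
  shows "emeasure M ({x \<in> space M. \<epsilon> < g x} \<inter> A)
    \<le> emeasure M ({x \<in> space M. w x \<le> \<eta>} \<inter> A) + ennreal (integral\<^sup>L M (\<lambda>x. g x * w x) / (\<epsilon> * \<eta>))"
proof -
  define D where "D = {x \<in> space M. w x \<le> \<eta>} \<inter> A"
  define Q where "Q = {x \<in> space M. \<epsilon> * \<eta> \<le> g x * w x}"
  have DQ: "D \<in> sets M" "Q \<in> sets M" unfolding D_def Q_def using A wm gm by measurable
  have "{x \<in> space M. \<epsilon> < g x} \<inter> A \<subseteq> D \<union> Q"
  proof
    fix x assume x: "x \<in> {x \<in> space M. \<epsilon> < g x} \<inter> A"
    show "x \<in> D \<union> Q"
    proof (cases "w x \<le> \<eta>")
      case False
      then have "\<epsilon> * \<eta> \<le> g x * w x" using x e \<eta> by (intro mult_mono) auto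
      then show ?thesis using x unfolding Q_def by auto
    qed (use x in \<open>auto simp: D_def\<close>)
  qed
  then have "emeasure M ({x \<in> space M. \<epsilon> < g x} \<inter> A) \<le> emeasure M D + emeasure M Q"
    using DQ by (intro order_trans[OF emeasure_mono emeasure_subadditive]) auto
  also have "emeasure M Q \<le> ennreal ((1 / (\<epsilon> * \<eta>)) * integral\<^sup>L M (\<lambda>x. g x * w x))"
    unfolding Q_def
    by (rule integral_Markov_inequality[OF gi]) (use g0 w0 e \<eta> in \<open>auto intro!: AE_I2\<close>)
  finally show ?thesis unfolding D_def by (simp add: field_simps)
qed

lemma loc_conv_in_measure_of_weighted_integral:
  fixes w :: "'a \<Rightarrow> real" and g :: "nat \<Rightarrow> 'a \<Rightarrow> real"
  assumes wm: "w \<in> borel_measurable M" and wpos: "\<And>x. x \<in> space M \<Longrightarrow> 0 < w x"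
    and gm: "\<And>n. g n \<in> borel_measurable M" and gnn: "\<And>n x. 0 \<le> g n x"
    and gi: "\<And>n. integrable M (\<lambda>x. g n x * w x)"
    and lim: "(\<lambda>n. integral\<^sup>L M (\<lambda>x. g n x * w x)) \<longlonglongrightarrow> 0"
  shows "loc_conv_in_measure M g (\<lambda>x. 0)"
  unfolding loc_conv_in_measure_def
proof (intro ballI impI allI)
  fix A \<epsilon> assume A: "A \<in> sets M" "emeasure M A < \<infinity>" and e: "(0::real) < \<epsilon>"
  show "(\<lambda>n. emeasure M ({x \<in> space M. \<epsilon> < \<bar>g n x - 0\<bar>} \<inter> A)) \<longlonglongrightarrow> 0"
  proof (rule order_tendstoI)
    fix a :: ennreal assume a: "0 < a"
    obtain c :: real where c: "0 < c" "ennreal (2 * c) < a"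
    proof (cases "a = top")
      case True
      show ?thesis by (rule that[of 1]) (use True in simp_all)
    next
      case False
      then obtain a' where a': "a = ennreal a'" "0 < a'" using a by (cases a rule: ennreal_cases) auto
      show ?thesis by (rule that[of "a' / 4"]) (use a' in \<open>simp_all add: ennreal_less_iff\<close>)
    qed
    have "eventually (\<lambda>j. emeasure M ({x \<in> space M. w x \<le> inverse (real (Suc j))} \<inter> A) < ennreal c)
      sequentially"
      using emeasure_weight_le_tendsto_0[OF wm wpos A] c(1) by (intro order_tendstoD(2)) auto
    then obtain j where j: "emeasure M ({x \<in> space M. w x \<le> inverse (real (Suc j))} \<inter> A) < ennreal c"
      by (auto simp: eventually_sequentially)
    define \<eta> where "\<eta> = inverse (real (Suc j))"
    have \<eta>: "0 < \<eta>" and D: "emeasure M ({x \<in> space M. w x \<le> \<eta>} \<inter> A) < ennreal c"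
      using j unfolding \<eta>_def by auto
    have "eventually (\<lambda>n. integral\<^sup>L M (\<lambda>x. g n x * w x) < \<epsilon> * \<eta> * c) sequentially"
      by (rule order_tendstoD(2)[OF lim]) (use e \<eta> c in simp)
    then show "eventually (\<lambda>n. emeasure M ({x \<in> space M. \<epsilon> < \<bar>g n x - 0\<bar>} \<inter> A) < a) sequentially"
    proof (rule eventually_mono)
      fix n assume n: "integral\<^sup>L M (\<lambda>x. g n x * w x) < \<epsilon> * \<eta> * c"
      have "emeasure M ({x \<in> space M. \<epsilon> < \<bar>g n x - 0\<bar>} \<inter> A)
          \<le> emeasure M ({x \<in> space M. w x \<le> \<eta>} \<inter> A) + ennreal (integral\<^sup>L M (\<lambda>x. g n x * w x) / (\<epsilon> * \<eta>))"
        using emeasure_level_set_le_weighted_Markov[OF wm _ gm gnn gi e \<eta> A(1)] wpos gnn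
        by (simp add: less_imp_le)
      also have "\<dots> \<le> ennreal c + ennreal c"
        using D n e \<eta> by (intro add_mono ennreal_leI) (auto simp: field_simps)
      also have "\<dots> < a" using c by (simp flip: ennreal_plus)
      finally show "emeasure M ({x \<in> space M. \<epsilon> < \<bar>g n x - 0\<bar>} \<inter> A) < a" .
    qed
  qed simp
qed

section \<open>Normal contractions and the space L2\<close>

definition normal_contraction :: "(real \<Rightarrow> real) \<Rightarrow> bool" where
  "normal_contraction C \<longleftrightarrow> (\<forall>s t. \<bar>C s - C t\<bar> \<le> \<bar>s - t\<bar>) \<and> C 0 = 0"

lemma measurable_lipschitz_comp:
  fixes k :: real
  assumes P: "\<And>a b. \<bar>P a - P b\<bar> \<le> k * \<bar>a - b\<bar>" and f: "f \<in> borel_measurable M"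
  shows "(\<lambda>x. P (f x)) \<in> borel_measurable M"
proof -
  have "\<bar>P a - P b\<bar> \<le> \<bar>k\<bar> * \<bar>a - b\<bar>" for a b
    by (rule order_trans[OF P mult_right_mono]) auto
  then have "\<bar>k\<bar>-lipschitz_on UNIV P"
    by (intro lipschitz_onI) (auto simp: dist_real_def)
  then have "continuous_on UNIV P" by (rule lipschitz_on_continuous_on)
  then have "P \<in> borel_measurable borel" by (rule borel_measurable_continuous_onI)
  then show ?thesis using f by (rule measurable_compose[rotated])
qed

lemma measurable_normal_contraction_comp:
  "normal_contraction C \<Longrightarrow> f \<in> borel_measurable M \<Longrightarrow> (\<lambda>x. C (f x)) \<in> borel_measurable M"
  by (rule measurable_lipschitz_comp[of _ 1]) (auto simp: normal_contraction_def)

lemma normal_contraction_abs_le: "normal_contraction C \<Longrightarrow> \<bar>C s\<bar> \<le> \<bar>s\<bar>"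
  unfolding normal_contraction_def by (metis diff_zero)

lemma normal_contraction_abs: "normal_contraction abs"
  unfolding normal_contraction_def by auto

lemma L2_zero: "(\<lambda>x. 0) \<in> L2 M"
  unfolding L2_def by simp

lemma L2_cmult: "f \<in> L2 M \<Longrightarrow> (\<lambda>x. c * f x) \<in> L2 M"
  unfolding L2_def by (auto simp: power_mult_distrib intro: integrable_mult_right)

lemma L2_add:
  assumes "f \<in> L2 M" "g \<in> L2 M"
  shows "(\<lambda>x. f x + g x) \<in> L2 M"
proof -
  have mf: "f \<in> borel_measurable M" and mg: "g \<in> borel_measurable M"
    and i: "integrable M (\<lambda>x. 2 * (f x)\<^sup>2 + 2 * (g x)\<^sup>2)"
    using assms unfolding L2_def by auto
  have "(a + b)\<^sup>2 \<le> 2 * a\<^sup>2 + 2 * b\<^sup>2" for a b :: real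
    using sum_power2_ge_zero[of "a - b" 0] by (simp add: power2_eq_square algebra_simps)
  then have "integrable M (\<lambda>x. (f x + g x)\<^sup>2)"
    using mf mg by (intro Bochner_Integration.integrable_bound[OF i]) (auto intro!: AE_I2)
  then show ?thesis using mf mg unfolding L2_def by auto
qed

lemma L2_diff: "f \<in> L2 M \<Longrightarrow> g \<in> L2 M \<Longrightarrow> (\<lambda>x. f x - g x) \<in> L2 M"
  using L2_add[of f M "\<lambda>x. (-1) * g x"] L2_cmult by fastforce

lemma L2_normal_contraction_comp:
  assumes f: "f \<in> L2 M" and C: "normal_contraction C"
  shows "(\<lambda>x. C (f x)) \<in> L2 M"
proof -
  have mf: "f \<in> borel_measurable M" and i: "integrable M (\<lambda>x. (f x)\<^sup>2)"
    using f unfolding L2_def by auto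
  have m: "(\<lambda>x. C (f x)) \<in> borel_measurable M" by (rule measurable_normal_contraction_comp[OF C mf])
  have "integrable M (\<lambda>x. (C (f x))\<^sup>2)"
    using m normal_contraction_abs_le[OF C]
    by (intro Bochner_Integration.integrable_bound[OF i]) (auto intro!: AE_I2 simp: abs_le_square_iff)
  then show ?thesis using m unfolding L2_def by auto
qed

lemma max_eq_mean_plus_abs: "max a b = (1/2) * a + (1/2) * b + \<bar>(1/2) * a - (1/2) * b\<bar>"
  for a b :: real
  by (simp add: max_def abs_if)

lemma L2_max: "f \<in> L2 M \<Longrightarrow> g \<in> L2 M \<Longrightarrow> (\<lambda>x. max (f x) (g x)) \<in> L2 M"
  unfolding max_eq_mean_plus_abs
  by (intro L2_add L2_cmult L2_normal_contraction_comp[OF _ normal_contraction_abs] L2_diff)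

section \<open>The form and its relaxation\<close>

locale nonlinear_dirichlet =
  fixes M :: "'a measure" and E :: "('a \<Rightarrow> real) \<Rightarrow> ennreal"
  assumes dirichlet_form: "nonlinear_dirichlet_form M E"
begin

lemma E_convex:
  "f \<in> L2 M \<Longrightarrow> g \<in> L2 M \<Longrightarrow> 0 \<le> t \<Longrightarrow> t \<le> 1 \<Longrightarrow>
    E (\<lambda>x. t * f x + (1 - t) * g x) \<le> ennreal t * E f + ennreal (1 - t) * E g"
  using dirichlet_form unfolding nonlinear_dirichlet_form_def by blast

lemma E_uminus: "f \<in> L2 M \<Longrightarrow> E (\<lambda>x. - f x) = E f"
  using dirichlet_form unfolding nonlinear_dirichlet_form_def by blast

lemma E_zero: "E (\<lambda>x. 0) = 0"
  using dirichlet_form unfolding nonlinear_dirichlet_form_def by blast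

lemma E_contraction:
  "f \<in> L2 M \<Longrightarrow> g \<in> L2 M \<Longrightarrow> normal_contraction C \<Longrightarrow>
    E (\<lambda>x. f x + C (g x)) + E (\<lambda>x. f x - C (g x)) \<le> E (\<lambda>x. f x + g x) + E (\<lambda>x. f x - g x)"
  using dirichlet_form unfolding nonlinear_dirichlet_form_def normal_contraction_def by blast

lemma E_normal_contraction:
  assumes g: "g \<in> L2 M" and C: "normal_contraction C"
  shows "E (\<lambda>x. C (g x)) \<le> E g"
proof -
  have "E (\<lambda>x. 0 + C (g x)) + E (\<lambda>x. 0 - C (g x)) \<le> E (\<lambda>x. 0 + g x) + E (\<lambda>x. 0 - g x)"
    by (rule E_contraction[OF L2_zero g C])
  then have "E (\<lambda>x. C (g x)) + E (\<lambda>x. C (g x)) \<le> E g + E g"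
    using E_uminus[OF g] E_uminus[OF L2_normal_contraction_comp[OF g C]] by simp
  then show ?thesis by (meson add_strict_mono linorder_not_less)
qed

lemma E_max:
  assumes f: "f \<in> L2 M" and g: "g \<in> L2 M"
  shows "E (\<lambda>x. max (f x) (g x)) \<le> E f + E g"
proof -
  define u where "u x = (1/2) * f x + (1/2) * g x" for x
  define v where "v x = (1/2) * f x - (1/2) * g x" for x
  have "u \<in> L2 M" "v \<in> L2 M" unfolding u_def v_def by (intro L2_add L2_diff L2_cmult f g)+
  then have "E (\<lambda>x. u x + \<bar>v x\<bar>) + E (\<lambda>x. u x - \<bar>v x\<bar>) \<le> E (\<lambda>x. u x + v x) + E (\<lambda>x. u x - v x)"
    by (rule E_contraction[OF _ _ normal_contraction_abs])
  moreover have "(\<lambda>x. u x + \<bar>v x\<bar>) = (\<lambda>x. max (f x) (g x))"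
    unfolding u_def v_def max_eq_mean_plus_abs ..
  moreover have "(\<lambda>x. u x + v x) = f" "(\<lambda>x. u x - v x) = g"
    unfolding u_def v_def by auto
  ultimately have "E (\<lambda>x. max (f x) (g x)) + E (\<lambda>x. u x - \<bar>v x\<bar>) \<le> E f + E g"
    by simp
  then show ?thesis by (rule order_trans[rotated]) (rule add_increasing2, auto)
qed

end

lemma E_e_le_approximants:
  assumes "\<And>n. g n \<in> borel_measurable M" "loc_conv_in_measure M g f" "\<And>n. E_ext M E (g n) \<le> c"
  shows "E_e M E f \<le> c"
proof -
  have "E_e M E f \<le> liminf (\<lambda>n. E_ext M E (g n))"
    unfolding E_e_def by (rule Inf_lower) (use assms in blast)
  also have "\<dots> \<le> limsup (\<lambda>n. E_ext M E (g n))" by (rule Liminf_le_Limsup) simp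
  also have "\<dots> \<le> c" by (rule Limsup_bounded) (use assms(3) in auto)
  finally show ?thesis .
qed

lemma E_e_le_E_ext: "f \<in> borel_measurable M \<Longrightarrow> E_e M E f \<le> E_ext M E f"
  by (rule E_e_le_approximants[of "\<lambda>n. f"]) (auto intro: loc_conv_in_measure_const)

lemma E_e_less_imp_approximants:
  assumes "E_e M E f < c"
  shows "\<exists>g. (\<forall>n. g n \<in> borel_measurable M) \<and> loc_conv_in_measure M g f \<and> (\<forall>n. E_ext M E (g n) < c)"
proof -
  from assms obtain g where g: "\<forall>n. g n \<in> borel_measurable M" "loc_conv_in_measure M g f"
    and "liminf (\<lambda>n. E_ext M E (g n)) < c"
    unfolding E_e_def by (auto simp: Inf_less_iff)
  then have "\<not> c \<le> liminf (\<lambda>n. E_ext M E (g n))" by simp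
  then obtain y where "y < c" "\<not> eventually (\<lambda>n. y < E_ext M E (g n)) sequentially"
    unfolding le_Liminf_iff by auto
  then have "frequently (\<lambda>n. E_ext M E (g n) < c) sequentially"
    unfolding not_eventually by (auto elim!: frequently_elim1)
  then have "infinite {n. E_ext M E (g n) < c}"
    unfolding cofinite_eq_sequentially[symmetric] frequently_cofinite .
  then obtain r :: "nat \<Rightarrow> nat" where "strict_mono r" "\<And>n. E_ext M E (g (r n)) < c"
    using infinite_enumerate by blast
  then show ?thesis using g loc_conv_in_measure_subseq by (intro exI[of _ "\<lambda>n. g (r n)"]) auto
qed

lemma L2_of_E_ext_less: "E_ext M E f < c \<Longrightarrow> f \<in> L2 M"
  unfolding E_ext_def by (cases "f \<in> L2 M") auto

text \<open>A diagonal sequence of approximants of the \<open>h k\<close> approximates the limit.\<close>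

lemma (in sigma_finite_measure) E_e_lsc:
  assumes hm: "\<And>k. h k \<in> borel_measurable M" and h'm: "h' \<in> borel_measurable M"
    and conv: "loc_conv_in_measure M h h'" and bd: "\<And>k. E_e M E (h k) \<le> c"
  shows "E_e M E h' \<le> c"
proof (rule dense_ge)
  fix c' assume "c < c'"
  obtain A :: "nat \<Rightarrow> 'a set" where A: "range A \<subseteq> sets M" "(\<Union>i. A i) = space M"
    "\<And>i. emeasure M (A i) \<noteq> \<infinity>" "incseq A"
    using sigma_finite_incseq by metis
  have "\<exists>g. (\<forall>n. g n \<in> borel_measurable M) \<and> loc_conv_in_measure M g (h k) \<and> (\<forall>n. E_ext M E (g n) < c')" for k
  proof -
    have "E_e M E (h k) < c'" using bd[of k] \<open>c < c'\<close> by (rule le_less_trans)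
    then show ?thesis by (rule E_e_less_imp_approximants)
  qed
  then obtain g where g: "\<And>k n. g k n \<in> borel_measurable M" "\<And>k. loc_conv_in_measure M (g k) (h k)"
    "\<And>k n. E_ext M E (g k n) < c'" by metis
  define small where
    "small k n \<longleftrightarrow> emeasure M ({x \<in> space M. inverse (real (Suc k)) < \<bar>g k n x - h k x\<bar>} \<inter> A k)
                    < ennreal (inverse (real (Suc k)))" for k n
  have "\<exists>n. small k n" for k
  proof -
    have "(\<lambda>n. emeasure M ({x \<in> space M. inverse (real (Suc k)) < \<bar>g k n x - h k x\<bar>} \<inter> A k)) \<longlonglongrightarrow> 0"
      using g(2)[of k] A(1) A(3)[of k] unfolding loc_conv_in_measure_def by (auto simp: less_top)
    then have "eventually (small k) sequentially"
      unfolding small_def by (rule order_tendstoD(2)) simp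
    then show ?thesis by (meson eventually_sequentially order_refl)
  qed
  then have n: "small k (SOME n. small k n)" for k by (rule someI_ex)
  define G where "G k = g k (SOME n. small k n)" for k
  have Gm: "\<And>k. G k \<in> borel_measurable M" unfolding G_def using g(1) by auto
  have "loc_conv_in_measure M (\<lambda>k x. G k x - h k x) (\<lambda>x. 0)"
    by (rule loc_conv_in_measure_diagonal[OF A Gm hm]) (use n in \<open>simp add: G_def small_def\<close>)
  then have "loc_conv_in_measure M G h'"
    by (rule loc_conv_in_measure_by_bound2[OF _ conv _ _ hm h'm]) (use Gm hm in auto)
  then show "E_e M E h' \<le> c'"
    by (rule E_e_le_approximants[OF Gm]) (use g(3) in \<open>auto simp: G_def intro: less_imp_le\<close>)
qed

lemma E_e_binop_le:
  fixes \<Phi> :: "real \<Rightarrow> real \<Rightarrow> real"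
  assumes f: "f \<in> borel_measurable M" and g: "g \<in> borel_measurable M"
    and \<Phi>_meas: "\<And>F G. F \<in> borel_measurable M \<Longrightarrow> G \<in> borel_measurable M \<Longrightarrow>
      (\<lambda>x. \<Phi> (F x) (G x)) \<in> borel_measurable M"
    and \<Phi>_lip: "\<And>s t s' t'. \<bar>\<Phi> s t - \<Phi> s' t'\<bar> \<le> \<bar>s - s'\<bar> + \<bar>t - t'\<bar>"
    and a: "E_e M E f < a" and b: "E_e M E g < b"
    and bound: "\<And>F G. F \<in> L2 M \<Longrightarrow> G \<in> L2 M \<Longrightarrow> E F < a \<Longrightarrow> E G < b \<Longrightarrow>
      E_ext M E (\<lambda>x. \<Phi> (F x) (G x)) \<le> c"
  shows "E_e M E (\<lambda>x. \<Phi> (f x) (g x)) \<le> c"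
proof -
  obtain F where F: "\<And>n. F n \<in> borel_measurable M" "loc_conv_in_measure M F f"
    "\<And>n. E_ext M E (F n) < a" using E_e_less_imp_approximants[OF a] by auto
  obtain G where G: "\<And>n. G n \<in> borel_measurable M" "loc_conv_in_measure M G g"
    "\<And>n. E_ext M E (G n) < b" using E_e_less_imp_approximants[OF b] by auto
  have L2: "F n \<in> L2 M" "G n \<in> L2 M" for n using F(3) G(3) by (auto intro: L2_of_E_ext_less)
  show ?thesis
  proof (rule E_e_le_approximants)
    show "(\<lambda>x. \<Phi> (F n x) (G n x)) \<in> borel_measurable M" for n by (intro \<Phi>_meas F G)
    show "loc_conv_in_measure M (\<lambda>n x. \<Phi> (F n x) (G n x)) (\<lambda>x. \<Phi> (f x) (g x))"
      by (rule loc_conv_in_measure_by_bound2[OF F(2) G(2) F(1) f G(1) g \<Phi>_lip])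
    show "E_ext M E (\<lambda>x. \<Phi> (F n x) (G n x)) \<le> c" for n
      using F(3)[of n] G(3)[of n] L2[of n] by (intro bound) (auto simp: E_ext_def)
  qed
qed

context nonlinear_dirichlet
begin

lemma E_e_zero: "E_e M E (\<lambda>x. 0) = 0"
  using E_e_le_E_ext[of "\<lambda>x. 0" M E] by (simp add: E_ext_def L2_zero E_zero)

lemma E_e_normal_contraction:
  assumes f: "f \<in> borel_measurable M" and C: "normal_contraction C"
  shows "E_e M E (\<lambda>x. C (f x)) \<le> E_e M E f"
proof (rule dense_ge)
  fix c assume "E_e M E f < c"
  then obtain g where g: "\<And>n. g n \<in> borel_measurable M" "loc_conv_in_measure M g f"
    "\<And>n. E_ext M E (g n) < c" using E_e_less_imp_approximants[of M E f c] by auto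
  have "E_ext M E (\<lambda>x. C (g n x)) \<le> E_ext M E (g n)" for n
    using E_normal_contraction[OF _ C, of "g n"] L2_normal_contraction_comp[OF _ C, of "g n" M]
    by (cases "g n \<in> L2 M") (auto simp: E_ext_def)
  then show "E_e M E (\<lambda>x. C (f x)) \<le> c"
    using g(3) C f g(1) unfolding normal_contraction_def
    by (intro E_e_le_approximants[of "\<lambda>n x. C (g n x)"] loc_conv_in_measure_by_bound[OF g(2)]
        measurable_normal_contraction_comp[OF C]) (auto intro: order_trans[OF _ less_imp_le])
qed

lemma E_e_convex:
  assumes f: "f \<in> borel_measurable M" and g: "g \<in> borel_measurable M"
    and t: "0 \<le> t" "t \<le> 1" and fin: "E_e M E f < \<infinity>" "E_e M E g < \<infinity>"
  shows "E_e M E (\<lambda>x. t * f x + (1 - t) * g x) \<le> ennreal t * E_e M E f + ennreal (1 - t) * E_e M E g"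
proof (rule ennreal_le_epsilon)
  fix e :: real assume e: "0 < e"
  define a where "a = E_e M E f + ennreal e"
  define b where "b = E_e M E g + ennreal e"
  have ab: "E_e M E f < a" "E_e M E g < b" using fin e unfolding a_def b_def by auto
  have "ennreal t * a + ennreal (1 - t) * b
      = ennreal t * E_e M E f + ennreal (1 - t) * E_e M E g + (ennreal t + ennreal (1 - t)) * ennreal e"
    unfolding a_def b_def by (simp add: algebra_simps)
  also have "ennreal t + ennreal (1 - t) = 1" using t ennreal_plus[of t "1 - t"] by simp
  finally have eq: "ennreal t * a + ennreal (1 - t) * b
      = ennreal t * E_e M E f + ennreal (1 - t) * E_e M E g + ennreal e" by simp
  have "E_e M E (\<lambda>x. t * f x + (1 - t) * g x) \<le> ennreal t * a + ennreal (1 - t) * b"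
  proof (rule E_e_binop_le[OF f g _ _ ab])
    show "\<bar>t * s + (1 - t) * r - (t * s' + (1 - t) * r')\<bar> \<le> \<bar>s - s'\<bar> + \<bar>r - r'\<bar>" for s r s' r'
    proof -
      have "\<bar>t * (s - s') + (1 - t) * (r - r')\<bar> \<le> \<bar>t * (s - s')\<bar> + \<bar>(1 - t) * (r - r')\<bar>"
        by (rule abs_triangle_ineq)
      also have "\<dots> = t * \<bar>s - s'\<bar> + (1 - t) * \<bar>r - r'\<bar>"
        using t by (simp add: abs_mult)
      also have "\<dots> \<le> \<bar>s - s'\<bar> + \<bar>r - r'\<bar>"
        using t by (intro add_mono mult_left_le_one_le) auto
      finally show ?thesis by (simp add: algebra_simps)
    qed
    fix F G assume FG: "F \<in> L2 M" "G \<in> L2 M" "E F < a" "E G < b"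
    have "E (\<lambda>x. t * F x + (1 - t) * G x) \<le> ennreal t * E F + ennreal (1 - t) * E G"
      by (rule E_convex[OF FG(1,2) t])
    also have "\<dots> \<le> ennreal t * a + ennreal (1 - t) * b"
      using FG(3,4) by (intro add_mono mult_left_mono) auto
    finally show "E_ext M E (\<lambda>x. t * F x + (1 - t) * G x) \<le> ennreal t * a + ennreal (1 - t) * b"
      using FG by (simp add: E_ext_def L2_add L2_cmult)
  qed simp
  then show "E_e M E (\<lambda>x. t * f x + (1 - t) * g x)
      \<le> ennreal t * E_e M E f + ennreal (1 - t) * E_e M E g + ennreal e"
    unfolding eq .
qed

lemma E_e_max:
  assumes f: "f \<in> borel_measurable M" and g: "g \<in> borel_measurable M"
  shows "E_e M E (\<lambda>x. max (f x) (g x)) \<le> E_e M E f + E_e M E g"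
proof (rule ennreal_le_epsilon)
  fix e :: real assume e: "0 < e" and fin: "E_e M E f + E_e M E g < top"
  define a where "a = E_e M E f + ennreal (e/2)"
  define b where "b = E_e M E g + ennreal (e/2)"
  have ab: "E_e M E f < a" "E_e M E g < b" using fin e unfolding a_def b_def by (auto simp: top_unique)
  have eq: "a + b = E_e M E f + E_e M E g + ennreal e"
    unfolding a_def b_def using ennreal_plus[of "e/2" "e/2"] e by (simp add: algebra_simps)
  have "E_e M E (\<lambda>x. max (f x) (g x)) \<le> a + b"
  proof (rule E_e_binop_le[OF f g _ _ ab])
    fix F G assume FG: "F \<in> L2 M" "G \<in> L2 M" "E F < a" "E G < b"
    then have "E (\<lambda>x. max (F x) (G x)) \<le> a + b"
      using E_max[OF FG(1,2)] by (meson add_mono less_imp_le order_trans)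
    then show "E_ext M E (\<lambda>x. max (F x) (G x)) \<le> a + b"
      using FG by (simp add: E_ext_def L2_max)
  qed (auto simp: max_def abs_if)
  then show "E_e M E (\<lambda>x. max (f x) (g x)) \<le> E_e M E f + E_e M E g + ennreal e"
    unfolding eq .
qed

lemma E_e_cmult_le:
  assumes f: "f \<in> borel_measurable M" and t: "0 \<le> t" "t \<le> 1"
  shows "E_e M E (\<lambda>x. t * f x) \<le> ennreal t * E_e M E f"
proof (cases "E_e M E f = \<infinity>")
  case True
  then show ?thesis
    using E_e_zero t by (cases "t = 0") (auto simp: ennreal_mult_top)
next
  case False
  then have "E_e M E (\<lambda>x. t * f x + (1 - t) * 0) \<le> ennreal t * E_e M E f + ennreal (1 - t) * E_e M E (\<lambda>x. 0)"
    using E_e_zero by (intro E_e_convex[OF f _ t]) (auto simp: less_top)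
  then show ?thesis by (simp add: E_e_zero)
qed

end

section \<open>The Luxemburg norm\<close>

definition Le_levels :: "'a measure \<Rightarrow> (('a \<Rightarrow> real) \<Rightarrow> ennreal) \<Rightarrow> ('a \<Rightarrow> real) \<Rightarrow> real set" where
  "Le_levels M E f = {l. 0 < l \<and> E_e M E (\<lambda>x. f x / l) \<le> 1}"

lemma Le_norm_eq_Inf: "Le_norm M E f = Inf (Le_levels M E f)"
  unfolding Le_norm_def Le_levels_def ..

lemma bdd_below_Le_levels: "bdd_below (Le_levels M E f)"
  unfolding Le_levels_def by (rule bdd_belowI[of _ 0]) auto

lemma Le_norm_le_level: "l \<in> Le_levels M E f \<Longrightarrow> Le_norm M E f \<le> l"
  unfolding Le_norm_eq_Inf by (rule cInf_lower[OF _ bdd_below_Le_levels])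

lemma Le_norm_leI:
  assumes "0 \<le> a" and "\<And>l. a < l \<Longrightarrow> l \<in> Le_levels M E f"
  shows "Le_norm M E f \<le> a"
proof (rule ccontr)
  assume "\<not> Le_norm M E f \<le> a"
  then have "a < (a + Le_norm M E f) / 2" "(a + Le_norm M E f) / 2 < Le_norm M E f" by auto
  then show False using Le_norm_le_level[OF assms(2)] by fastforce
qed

lemma div_eq_inverse_mult: "(\<lambda>x. f x / l) = (\<lambda>x. inverse l * f x)"
  for f :: "'a \<Rightarrow> real"
  by (simp add: divide_inverse_commute)

lemma ME_measurable: "f \<in> ME M E \<Longrightarrow> f \<in> borel_measurable M"
  unfolding ME_def by auto

context nonlinear_dirichlet
begin

lemma E_e_cmult_le_mult:
  assumes f: "f \<in> borel_measurable M" and l: "0 < l" "l \<le> l'"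
  shows "E_e M E (\<lambda>x. l * f x) \<le> ennreal (l / l') * E_e M E (\<lambda>x. l' * f x)"
proof -
  have eq: "(\<lambda>x. l * f x) = (\<lambda>x. (l / l') * (l' * f x))" using l by auto
  show ?thesis unfolding eq using l f by (intro E_e_cmult_le) auto
qed

lemma ME_imp_E_e_less_1:
  assumes "f \<in> ME M E"
  shows "\<exists>l>0. E_e M E (\<lambda>x. l * f x) < 1"
proof -
  have "eventually (\<lambda>l. E_e M E (\<lambda>x. l * f x) < 1) (at_right 0)"
    using assms unfolding ME_def by (intro order_tendstoD(2)) auto
  then obtain b where b: "0 < b" "\<And>l. 0 < l \<Longrightarrow> l < b \<Longrightarrow> E_e M E (\<lambda>x. l * f x) < 1"
    unfolding eventually_at_right_field by auto
  have "E_e M E (\<lambda>x. (b / 2) * f x) < 1" by (rule b(2)) (use b in auto)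
  then show ?thesis using b(1) by (intro exI[of _ "b / 2"]) auto
qed

lemma ME_iff_E_e_finite:
  "f \<in> ME M E \<longleftrightarrow> f \<in> borel_measurable M \<and> (\<exists>l>0. E_e M E (\<lambda>x. l * f x) < \<infinity>)"
proof
  assume "f \<in> ME M E"
  then show "f \<in> borel_measurable M \<and> (\<exists>l>0. E_e M E (\<lambda>x. l * f x) < \<infinity>)"
    using ME_imp_E_e_less_1 ME_measurable by (fastforce intro: order.strict_trans)
next
  assume "f \<in> borel_measurable M \<and> (\<exists>l>0. E_e M E (\<lambda>x. l * f x) < \<infinity>)"
  then obtain l where f: "f \<in> borel_measurable M" and l: "0 < l" "E_e M E (\<lambda>x. l * f x) < \<infinity>"
    by blast
  have lim: "((\<lambda>s. ennreal (s / l) * E_e M E (\<lambda>x. l * f x)) \<longlongrightarrow> 0) (at_right 0)"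
  proof -
    have "((\<lambda>s. ennreal (s / l)) \<longlongrightarrow> ennreal (0 / l)) (at_right 0)"
      by (intro tendsto_ennrealI tendsto_intros) (use l in auto)
    then show ?thesis
      using l(2) by (auto intro: tendsto_mult_ennreal[THEN tendsto_eq_rhs])
  qed
  have "eventually (\<lambda>s. E_e M E (\<lambda>x. s * f x) \<le> ennreal (s / l) * E_e M E (\<lambda>x. l * f x)) (at_right 0)"
    unfolding eventually_at_right_field using l by (auto intro!: exI[of _ l] E_e_cmult_le_mult f)
  then have "((\<lambda>s. E_e M E (\<lambda>x. s * f x)) \<longlongrightarrow> 0) (at_right 0)"
    by (intro tendsto_sandwich[OF _ _ tendsto_const lim]) auto
  then show "f \<in> ME M E" using f unfolding ME_def by auto
qed

lemma Le_levels_mono: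
  assumes f: "f \<in> borel_measurable M" and l: "l \<in> Le_levels M E f" "l \<le> l'"
  shows "l' \<in> Le_levels M E f"
proof -
  have l0: "0 < l" and e1: "E_e M E (\<lambda>x. inverse l * f x) \<le> 1"
    using l(1) unfolding Le_levels_def div_eq_inverse_mult by auto
  have "E_e M E (\<lambda>x. inverse l' * f x) \<le> ennreal (inverse l' / inverse l) * E_e M E (\<lambda>x. inverse l * f x)"
    using l0 l(2) f by (intro E_e_cmult_le_mult) (auto simp: le_imp_inverse_le)
  also have "\<dots> \<le> ennreal (inverse l' / inverse l) * 1"
    using e1 by (rule mult_left_mono) simp
  also have "\<dots> \<le> 1" using l0 l(2) by (simp add: field_simps)
  finally show ?thesis using l0 l(2) unfolding Le_levels_def div_eq_inverse_mult by simp
qed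

lemma Le_levels_nonempty:
  assumes f: "f \<in> ME M E"
  shows "Le_levels M E f \<noteq> {}"
proof -
  obtain l where "0 < l" "E_e M E (\<lambda>x. l * f x) < 1"
    using ME_imp_E_e_less_1[OF f] by blast
  then have "inverse l \<in> Le_levels M E f"
    unfolding Le_levels_def div_eq_inverse_mult by simp
  then show ?thesis by blast
qed

lemma Le_norm_nonneg: "f \<in> ME M E \<Longrightarrow> 0 \<le> Le_norm M E f"
  unfolding Le_norm_eq_Inf
  by (rule cInf_greatest[OF Le_levels_nonempty]) (auto simp: Le_levels_def)

lemma Le_levels_if_Le_norm_less:
  assumes f: "f \<in> ME M E" and l: "Le_norm M E f < l"
  shows "l \<in> Le_levels M E f"
proof -
  obtain l0 where "l0 \<in> Le_levels M E f" "l0 < l"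
    using l cInf_less_iff[OF Le_levels_nonempty[OF f] bdd_below_Le_levels] unfolding Le_norm_eq_Inf
    by auto
  then show ?thesis using Le_levels_mono[OF ME_measurable[OF f]] by auto
qed

lemma E_e_div_le_if_Le_norm_less:
  "f \<in> ME M E \<Longrightarrow> Le_norm M E f < l \<Longrightarrow> E_e M E (\<lambda>x. f x / l) \<le> 1"
  using Le_levels_if_Le_norm_less unfolding Le_levels_def by blast

lemma ME_if_in_Le_levels:
  assumes f: "f \<in> borel_measurable M" and l: "l \<in> Le_levels M E f"
  shows "f \<in> ME M E"
  using l f unfolding ME_iff_E_e_finite Le_levels_def div_eq_inverse_mult
  by (auto intro!: exI[of _ "inverse l"] simp: le_less_trans[OF _ ennreal_one_less_top])

lemma E_e_lipschitz_comp_le: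
  assumes f: "f \<in> borel_measurable M" and k: "0 < k"
    and P: "\<And>a b. \<bar>P a - P b\<bar> \<le> k * \<bar>a - b\<bar>" and P0: "P 0 = 0" and c: "0 < c"
  shows "E_e M E (\<lambda>x. c * P (f x)) \<le> E_e M E (\<lambda>x. (c * k) * f x)"
proof -
  define C where "C t = c * P (t / (c * k))" for t
  have "normal_contraction C" unfolding normal_contraction_def
  proof (intro conjI allI)
    fix s t
    have "\<bar>C s - C t\<bar> = c * \<bar>P (s / (c * k)) - P (t / (c * k))\<bar>"
      unfolding C_def using c by (simp add: abs_mult right_diff_distrib[symmetric])
    also have "\<dots> \<le> c * (k * \<bar>s / (c * k) - t / (c * k)\<bar>)"
      using P c by (intro mult_left_mono) auto
    also have "\<dots> = \<bar>s - t\<bar>"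
      using c k by (simp add: field_simps abs_divide diff_divide_distrib[symmetric])
    finally show "\<bar>C s - C t\<bar> \<le> \<bar>s - t\<bar>" .
    show "C 0 = 0" unfolding C_def using P0 by simp
  qed
  moreover have "(\<lambda>x. c * P (f x)) = (\<lambda>x. C ((c * k) * f x))"
    unfolding C_def using c k by auto
  ultimately show ?thesis using f by (auto intro: E_e_normal_contraction)
qed

lemma ME_lipschitz_comp:
  assumes f: "f \<in> ME M E" and k: "0 < k"
    and P: "\<And>a b. \<bar>P a - P b\<bar> \<le> k * \<bar>a - b\<bar>" and P0: "P 0 = 0"
  shows "(\<lambda>x. P (f x)) \<in> ME M E"
proof -
  have mf: "f \<in> borel_measurable M" using ME_measurable[OF f] .
  obtain l where l: "0 < l" "E_e M E (\<lambda>x. l * f x) < \<infinity>"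
    using f unfolding ME_iff_E_e_finite by blast
  have "E_e M E (\<lambda>x. (l / k) * P (f x)) \<le> E_e M E (\<lambda>x. (l / k * k) * f x)"
    using l k by (intro E_e_lipschitz_comp_le[OF mf k P P0]) auto
  also have "l / k * k = l" using k by simp
  finally have "E_e M E (\<lambda>x. (l / k) * P (f x)) < \<infinity>" using l(2) by (rule le_less_trans)
  moreover have "0 < l / k" using l k by simp
  ultimately show ?thesis
    using measurable_lipschitz_comp[OF P mf] unfolding ME_iff_E_e_finite by blast
qed

lemma Le_norm_lipschitz_comp:
  assumes f: "f \<in> ME M E" and k: "0 < k"
    and P: "\<And>a b. \<bar>P a - P b\<bar> \<le> k * \<bar>a - b\<bar>" and P0: "P 0 = 0"
  shows "Le_norm M E (\<lambda>x. P (f x)) \<le> k * Le_norm M E f"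
proof (rule Le_norm_leI)
  show "0 \<le> k * Le_norm M E f" using k Le_norm_nonneg[OF f] by simp
  fix m assume m: "k * Le_norm M E f < m"
  have m0: "0 < m"
    using m mult_nonneg_nonneg[OF less_imp_le[OF k] Le_norm_nonneg[OF f]] by linarith
  from m have "m / k \<in> Le_levels M E f"
    using k by (intro Le_levels_if_Le_norm_less[OF f]) (simp add: field_simps)
  then have l: "0 < m / k" "E_e M E (\<lambda>x. inverse (m / k) * f x) \<le> 1"
    unfolding Le_levels_def div_eq_inverse_mult by auto
  have "E_e M E (\<lambda>x. inverse m * P (f x)) \<le> E_e M E (\<lambda>x. (inverse m * k) * f x)"
    using m0 by (intro E_e_lipschitz_comp_le[OF ME_measurable[OF f] k P P0]) auto
  also have "inverse m * k = inverse (m / k)" by (simp add: divide_inverse_commute)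
  finally show "m \<in> Le_levels M E (\<lambda>x. P (f x))"
    using m0 l k unfolding Le_levels_def div_eq_inverse_mult by auto
qed

lemma ME_zero: "(\<lambda>x. 0) \<in> ME M E"
  unfolding ME_def by (simp add: E_e_zero)

lemma Le_norm_zero: "Le_norm M E (\<lambda>x. 0) = 0"
proof -
  have "Le_levels M E (\<lambda>x. 0) = {0<..}" unfolding Le_levels_def by (auto simp: E_e_zero)
  then show ?thesis unfolding Le_norm_eq_Inf by simp
qed

lemma ME_cmult: "f \<in> ME M E \<Longrightarrow> (\<lambda>x. c * f x) \<in> ME M E"
  using ME_lipschitz_comp[of f 1 "\<lambda>t. c * t"] ME_zero
  by (cases "c = 0") (auto simp: abs_mult right_diff_distrib[symmetric] intro: ME_lipschitz_comp[of f "\<bar>c\<bar>"])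

lemma Le_norm_cmult:
  assumes f: "f \<in> ME M E"
  shows "Le_norm M E (\<lambda>x. c * f x) = \<bar>c\<bar> * Le_norm M E f"
proof (cases "c = 0")
  case True
  then show ?thesis using Le_norm_zero by simp
next
  case False
  then have c: "0 < \<bar>c\<bar>" by simp
  have le: "Le_norm M E (\<lambda>x. c * f x) \<le> \<bar>c\<bar> * Le_norm M E f"
    by (rule Le_norm_lipschitz_comp[OF f c]) (auto simp: abs_mult right_diff_distrib[symmetric])
  have "Le_norm M E (\<lambda>x. inverse c * (c * f x)) \<le> \<bar>inverse c\<bar> * Le_norm M E (\<lambda>x. c * f x)"
    using False
    by (intro Le_norm_lipschitz_comp[OF ME_cmult[OF f]]) (auto simp: abs_mult right_diff_distrib[symmetric])
  then have "\<bar>c\<bar> * Le_norm M E f \<le> Le_norm M E (\<lambda>x. c * f x)"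
    using False c by (simp add: field_simps)
  with le show ?thesis by simp
qed

text \<open>\<open>(f + g) / (p + q)\<close> is the convex combination of \<open>f / p\<close> and \<open>g / q\<close> with
  weight \<open>p / (p + q)\<close>.\<close>

lemma Le_levels_add:
  assumes f: "f \<in> borel_measurable M" and g: "g \<in> borel_measurable M"
    and p: "p \<in> Le_levels M E f" and q: "q \<in> Le_levels M E g"
  shows "p + q \<in> Le_levels M E (\<lambda>x. f x + g x)"
proof -
  have p0: "0 < p" and q0: "0 < q" and ep: "E_e M E (\<lambda>x. f x / p) \<le> 1"
    and eq: "E_e M E (\<lambda>x. g x / q) \<le> 1"
    using p q unfolding Le_levels_def by auto
  define t where "t = p / (p + q)"
  have t: "0 \<le> t" "t \<le> 1" "1 - t = q / (p + q)" unfolding t_def using p0 q0 by (auto simp: field_simps)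
  have "(\<lambda>x. (f x + g x) / (p + q)) = (\<lambda>x. t * (f x / p) + (1 - t) * (g x / q))"
    unfolding t(3) unfolding t_def using p0 q0 by (auto simp: add_divide_distrib)
  moreover have "E_e M E (\<lambda>x. t * (f x / p) + (1 - t) * (g x / q))
      \<le> ennreal t * E_e M E (\<lambda>x. f x / p) + ennreal (1 - t) * E_e M E (\<lambda>x. g x / q)"
    using ep eq f g t by (intro E_e_convex) (auto simp: le_less_trans[OF _ ennreal_one_less_top])
  moreover have "\<dots> \<le> ennreal t * 1 + ennreal (1 - t) * 1"
    by (intro add_mono mult_left_mono ep eq) auto
  moreover have "\<dots> = 1" using t(1,2) by (simp flip: ennreal_plus)
  ultimately show ?thesis using p0 q0 unfolding Le_levels_def by auto
qed

lemma ME_add: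
  assumes f: "f \<in> ME M E" and g: "g \<in> ME M E"
  shows "(\<lambda>x. f x + g x) \<in> ME M E"
proof -
  obtain p q where "p \<in> Le_levels M E f" "q \<in> Le_levels M E g"
    using Le_levels_nonempty[OF f] Le_levels_nonempty[OF g] by blast
  then show ?thesis
    using ME_measurable[OF f] ME_measurable[OF g]
    by (intro ME_if_in_Le_levels[of _ "p + q"] Le_levels_add) auto
qed

lemma Le_norm_triangle:
  assumes f: "f \<in> ME M E" and g: "g \<in> ME M E"
  shows "Le_norm M E (\<lambda>x. f x + g x) \<le> Le_norm M E f + Le_norm M E g"
proof (rule Le_norm_leI)
  show "0 \<le> Le_norm M E f + Le_norm M E g" using Le_norm_nonneg[OF f] Le_norm_nonneg[OF g] by simp
  fix m assume m: "Le_norm M E f + Le_norm M E g < m"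
  define d where "d = (m - (Le_norm M E f + Le_norm M E g)) / 2"
  have "Le_norm M E f + d \<in> Le_levels M E f" "Le_norm M E g + d \<in> Le_levels M E g"
    using m unfolding d_def by (auto intro!: Le_levels_if_Le_norm_less f g)
  from Le_levels_add[OF ME_measurable[OF f] ME_measurable[OF g] this]
  show "m \<in> Le_levels M E (\<lambda>x. f x + g x)" unfolding d_def by simp
qed

lemma ME_diff: "f \<in> ME M E \<Longrightarrow> g \<in> ME M E \<Longrightarrow> (\<lambda>x. f x - g x) \<in> ME M E"
  using ME_add[of f "\<lambda>x. (-1) * g x"] ME_cmult[of g "-1"] by simp

end

section \<open>Truncation and the essential supremum\<close>

lemma AE_abs_le_sup_norm:
  assumes f: "f \<in> Linf M"
  shows "AE x in M. \<bar>f x\<bar> \<le> sup_norm M f"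
proof -
  from f obtain C where mf: "f \<in> borel_measurable M" and C: "AE x in M. \<bar>f x\<bar> \<le> C"
    unfolding Linf_def by auto
  have "esssup M (\<lambda>x. ereal \<bar>f x\<bar>) \<le> ereal C"
    using mf C by (intro esssup_I) auto
  moreover have "AE x in M. ereal \<bar>f x\<bar> \<le> esssup M (\<lambda>x. ereal \<bar>f x\<bar>)" by (rule esssup_AE)
  ultimately show ?thesis
    unfolding sup_norm_def by (cases "esssup M (\<lambda>x. ereal \<bar>f x\<bar>)") auto
qed

lemma sup_norm_le:
  assumes mf: "f \<in> borel_measurable M" and c: "0 \<le> c" and ae: "AE x in M. \<bar>f x\<bar> \<le> c"
  shows "sup_norm M f \<le> c"
proof -
  have "esssup M (\<lambda>x. ereal \<bar>f x\<bar>) \<le> ereal c"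
    using mf ae by (intro esssup_I) auto
  then show ?thesis unfolding sup_norm_def using c
    by (cases "esssup M (\<lambda>x. ereal \<bar>f x\<bar>)") auto
qed

lemma sup_norm_nonneg:
  assumes mf: "f \<in> borel_measurable M"
  shows "0 \<le> sup_norm M f"
proof (cases "emeasure M (space M) = 0")
  case True
  then show ?thesis
    unfolding sup_norm_def using mf by (simp add: esssup_zero_space)
next
  case False
  have "esssup M (\<lambda>x. ereal 0) \<le> esssup M (\<lambda>x. ereal \<bar>f x\<bar>)"
    by (rule esssup_mono) auto
  then have "0 \<le> esssup M (\<lambda>x. ereal \<bar>f x\<bar>)"
    using esssup_const[OF False, of "ereal 0"] by (simp add: zero_ereal_def)
  then show ?thesis unfolding sup_norm_def by (cases "esssup M (\<lambda>x. ereal \<bar>f x\<bar>)") auto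
qed

definition unit_trunc :: "('a \<Rightarrow> real) \<Rightarrow> 'a \<Rightarrow> real" where
  "unit_trunc f x = min \<bar>f x\<bar> 1"

lemma unit_trunc_nonneg [simp]: "0 \<le> unit_trunc f x"
  and unit_trunc_le_1 [simp]: "unit_trunc f x \<le> 1"
  and unit_trunc_eq_0_iff [simp]: "unit_trunc f x = 0 \<longleftrightarrow> f x = 0"
  unfolding unit_trunc_def by auto

lemma measurable_unit_trunc [measurable]:
  "f \<in> borel_measurable M \<Longrightarrow> unit_trunc f \<in> borel_measurable M"
  unfolding unit_trunc_def by measurable

lemma Linf_unit_trunc: "f \<in> borel_measurable M \<Longrightarrow> unit_trunc f \<in> Linf M"
  unfolding Linf_def by (auto intro!: exI[of _ 1])

lemma sup_norm_unit_trunc_le: "f \<in> borel_measurable M \<Longrightarrow> sup_norm M (unit_trunc f) \<le> 1"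
  by (rule sup_norm_le) auto

lemma unit_trunc_lipschitz: "\<bar>min \<bar>a\<bar> 1 - min \<bar>b\<bar> (1::real)\<bar> \<le> 1 * \<bar>a - b\<bar>"
  by (simp add: min_def abs_if)

context nonlinear_dirichlet
begin

lemma ME_unit_trunc: "f \<in> ME M E \<Longrightarrow> unit_trunc f \<in> ME M E"
  unfolding unit_trunc_def
  using ME_lipschitz_comp[of f 1 "\<lambda>t. min \<bar>t\<bar> 1"] unit_trunc_lipschitz by simp

lemma Le_norm_unit_trunc_le: "f \<in> ME M E \<Longrightarrow> Le_norm M E (unit_trunc f) \<le> Le_norm M E f"
  unfolding unit_trunc_def
  using Le_norm_lipschitz_comp[of f 1 "\<lambda>t. min \<bar>t\<bar> 1"] unit_trunc_lipschitz by simp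

end

section \<open>Functions of small norm have small weighted integral\<close>

definition tail_sup :: "(nat \<Rightarrow> 'a \<Rightarrow> real) \<Rightarrow> nat \<Rightarrow> 'a \<Rightarrow> real" where
  "tail_sup h N x = (SUP K. Max ((\<lambda>n. h (N + n) x) ` {..K}))"

context
  fixes h :: "nat \<Rightarrow> 'a \<Rightarrow> real"
  assumes h01: "\<And>n x. 0 \<le> h n x \<and> h n x \<le> 1"
begin

lemma tail_sup_LIMSEQ: "(\<lambda>K. Max ((\<lambda>n. h (N + n) x) ` {..K})) \<longlonglongrightarrow> tail_sup h N x"
  unfolding tail_sup_def
  using h01 by (intro LIMSEQ_incseq_SUP) (auto intro!: bdd_aboveI2[where M=1] Max.boundedI incseq_SucI Max_mono)

lemma tail_sup_ge: "h N x \<le> tail_sup h N x"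
  by (rule LIMSEQ_le_const[OF tail_sup_LIMSEQ]) (auto intro!: exI[of _ 0] Max_ge[of _ "h N x"] image_eqI[of _ _ 0])

lemma tail_sup_nonneg: "0 \<le> tail_sup h N x"
  using tail_sup_ge h01 order_trans by blast

lemma tail_sup_le_1: "tail_sup h N x \<le> 1"
  by (rule LIMSEQ_le_const2[OF tail_sup_LIMSEQ]) (use h01 in auto)

lemma tail_sup_Suc_le: "tail_sup h (Suc N) x \<le> tail_sup h N x"
proof (rule LIMSEQ_le_const2[OF tail_sup_LIMSEQ], intro exI allI impI)
  fix K
  have "h (Suc N + n) x \<le> Max ((\<lambda>n. h (N + n) x) ` {..Suc K})" if "n \<le> K" for n
    using that by (intro Max_ge) (auto intro!: image_eqI[of _ _ "Suc n"])
  then have "Max ((\<lambda>n. h (Suc N + n) x) ` {..K}) \<le> Max ((\<lambda>n. h (N + n) x) ` {..Suc K})"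
    by (auto intro!: Max.boundedI)
  also have "\<dots> \<le> tail_sup h N x"
    by (rule incseq_le[OF _ tail_sup_LIMSEQ]) (auto intro!: incseq_SucI Max_mono)
  finally show "Max ((\<lambda>n. h (Suc N + n) x) ` {..K}) \<le> tail_sup h N x" .
qed

lemma tail_sup_LIMSEQ_limsup: "(\<lambda>N. tail_sup h N x) \<longlonglongrightarrow> (INF N. tail_sup h N x)"
  by (intro LIMSEQ_decseq_INF decseq_SucI tail_sup_Suc_le bdd_belowI2[where m=0] tail_sup_nonneg)

lemma measurable_tail_sup:
  "(\<And>n. h n \<in> borel_measurable M) \<Longrightarrow> tail_sup h N \<in> borel_measurable M"
  by (rule borel_measurable_LIMSEQ_real[OF tail_sup_LIMSEQ]) measurable

end

context nonlinear_dirichlet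
begin

lemma E_e_Max_le_sum:
  fixes K :: nat
  assumes hm: "\<And>n. h n \<in> borel_measurable M"
  shows "E_e M E (\<lambda>x. Max ((\<lambda>n. h n x) ` {..K})) \<le> (\<Sum>n\<le>K. E_e M E (h n))"
proof (induction K)
  case 0
  then show ?case by simp
next
  case (Suc K)
  have "(\<lambda>x. Max ((\<lambda>n. h n x) ` {..Suc K})) = (\<lambda>x. max (Max ((\<lambda>n. h n x) ` {..K})) (h (Suc K) x))"
    by (auto simp: atMost_Suc max.commute)
  then have "E_e M E (\<lambda>x. Max ((\<lambda>n. h n x) ` {..Suc K}))
      \<le> E_e M E (\<lambda>x. Max ((\<lambda>n. h n x) ` {..K})) + E_e M E (h (Suc K))"
    using hm by (simp add: E_e_max)
  also have "\<dots> \<le> (\<Sum>n\<le>Suc K. E_e M E (h n))" using Suc by (simp add: add_mono)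
  finally show ?case .
qed

lemma E_e_cmult_le_if_Le_norm_less:
  assumes f: "f \<in> ME M E" and a: "Le_norm M E f < a" and c: "0 \<le> c" "c * a \<le> 1"
  shows "E_e M E (\<lambda>x. c * f x) \<le> ennreal (c * a)"
proof -
  have a0: "0 < a" using a Le_norm_nonneg[OF f] by linarith
  have "E_e M E (\<lambda>x. (c * a) * (f x / a)) \<le> ennreal (c * a) * E_e M E (\<lambda>x. f x / a)"
    using ME_measurable[OF f] a0 c by (intro E_e_cmult_le) auto
  also have "\<dots> \<le> ennreal (c * a) * 1"
    by (intro mult_left_mono E_e_div_le_if_Le_norm_less[OF f a]) simp
  finally show ?thesis using a0 by simp
qed

lemma Le_norm_eq_0_if_E_e_cmult_eq_0:
  assumes f: "f \<in> borel_measurable M" and E0: "\<And>c. 0 < c \<Longrightarrow> E_e M E (\<lambda>x. c * f x) = 0"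
  shows "f \<in> ME M E" "Le_norm M E f = 0"
proof -
  have "l \<in> Le_levels M E f" if "0 < l" for l
    using E0[of "inverse l"] that unfolding Le_levels_def div_eq_inverse_mult by simp
  then show "f \<in> ME M E" "Le_norm M E f = 0"
    using ME_if_in_Le_levels[OF f, of 1] Le_norm_leI[of 0 M E f] Le_norm_nonneg
    by (auto intro: antisym)
qed

end

locale sigma_finite_nonlinear_dirichlet = nonlinear_dirichlet + sigma_finite_measure M
begin

lemma E_e_tail_sup_le:
  assumes hME: "\<And>n. h n \<in> ME M E" and h01: "\<And>n x. 0 \<le> h n x \<and> h n x \<le> 1"
    and hN: "\<And>n. Le_norm M E (h n) < (1/2)^n"
    and c: "0 < c" "c * (1/2)^N \<le> 1"
  shows "E_e M E (\<lambda>x. c * tail_sup h N x) \<le> ennreal (2 * c * (1/2)^N)"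
proof (rule E_e_lsc[of "\<lambda>K x. c * Max ((\<lambda>n. h (N + n) x) ` {..K})"])
  have hm [measurable]: "h n \<in> borel_measurable M" for n using ME_measurable[OF hME] .
  show "(\<lambda>x. c * Max ((\<lambda>n. h (N + n) x) ` {..K})) \<in> borel_measurable M" for K
    by measurable
  show tm: "(\<lambda>x. c * tail_sup h N x) \<in> borel_measurable M"
    using measurable_tail_sup[OF h01 hm] by measurable
  show "loc_conv_in_measure M (\<lambda>K x. c * Max ((\<lambda>n. h (N + n) x) ` {..K})) (\<lambda>x. c * tail_sup h N x)"
    by (intro AE_tendsto_imp_loc_conv_in_measure tm AE_I2 tendsto_mult_left tail_sup_LIMSEQ h01)
      measurable
  fix K
  have "(\<lambda>x. c * Max ((\<lambda>n. h (N + n) x) ` {..K})) = (\<lambda>x. Max ((\<lambda>n. c * h (N + n) x) ` {..K}))"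
    using c by (subst mono_Max_commute) (auto simp: mono_def image_image)
  then have "E_e M E (\<lambda>x. c * Max ((\<lambda>n. h (N + n) x) ` {..K})) \<le> (\<Sum>n\<le>K. E_e M E (\<lambda>x. c * h (N + n) x))"
    by (simp add: E_e_Max_le_sum)
  also have "\<dots> \<le> (\<Sum>n\<le>K. ennreal (c * (1/2)^(N + n)))"
  proof (intro sum_mono E_e_cmult_le_if_Le_norm_less hME hN)
    fix n
    have "c * (1/2)^(N + n) \<le> c * (1/2)^N"
      using c by (intro mult_left_mono power_decreasing) auto
    then show "c * (1/2::real)^(N + n) \<le> 1" using c by linarith
  qed (use c in auto)
  also have "\<dots> = ennreal (c * (1/2)^N * (\<Sum>n\<le>K. (1/2)^n))"
    using c by (simp add: sum_distrib_left power_add mult.assoc sum_ennreal)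
  also have "\<dots> \<le> ennreal (2 * c * (1/2)^N)"
    using geometric_sum_less[of "1/2::real" "{..K}"] c by (intro ennreal_leI) simp
  finally show "E_e M E (\<lambda>x. c * Max ((\<lambda>n. h (N + n) x) ` {..K})) \<le> ennreal (2 * c * (1/2)^N)" .
qed

lemma E_e_limsup_eq_0:
  assumes hME: "\<And>n. h n \<in> ME M E" and h01: "\<And>n x. 0 \<le> h n x \<and> h n x \<le> 1"
    and hN: "\<And>n. Le_norm M E (h n) < (1/2)^n" and c: "0 < c"
  shows "E_e M E (\<lambda>x. c * (INF N. tail_sup h N x)) = 0"
proof -
  have hm [measurable]: "h n \<in> borel_measurable M" for n using ME_measurable[OF hME] .
  have "E_e M E (\<lambda>x. c * (INF N. tail_sup h N x)) \<le> ennreal e" if e: "0 < e" for e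
  proof -
    obtain N where N: "(1/2::real)^N < min (1 / c) (e / (2 * c))"
      using real_arch_pow_inv[of "min (1 / c) (e / (2 * c))" "1/2"] c e by auto
    have le: "c * (1/2)^(k + N) \<le> c * (1/2::real)^N" for k
      using c by (intro mult_left_mono power_decreasing) auto
    have "c * (1/2)^N < c * (1 / c)" "2 * c * (1/2)^N < 2 * c * (e / (2 * c))"
      using N c by (intro mult_strict_left_mono; simp)+
    then have cN: "c * (1/2)^N < 1" "2 * c * (1/2)^N < e" using c by auto
    show ?thesis
    proof (rule E_e_lsc[of "\<lambda>k x. c * tail_sup h (k + N) x"])
      show tm: "(\<lambda>x. c * tail_sup h (k + N) x) \<in> borel_measurable M" for k
        using measurable_tail_sup[OF h01 hm] by measurable
      show Hm: "(\<lambda>x. c * (INF N. tail_sup h N x)) \<in> borel_measurable M"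
        using borel_measurable_LIMSEQ_real[OF tail_sup_LIMSEQ_limsup[OF h01]
            measurable_tail_sup[OF h01 hm]] by measurable
      show "loc_conv_in_measure M (\<lambda>k x. c * tail_sup h (k + N) x) (\<lambda>x. c * (INF N. tail_sup h N x))"
        by (intro AE_tendsto_imp_loc_conv_in_measure tm Hm AE_I2 tendsto_mult_left
            LIMSEQ_ignore_initial_segment tail_sup_LIMSEQ_limsup h01)
      fix k
      have "E_e M E (\<lambda>x. c * tail_sup h (k + N) x) \<le> ennreal (2 * c * (1/2)^(k + N))"
        using order_trans[OF le[of k] less_imp_le[OF cN(1)]] c by (intro E_e_tail_sup_le hME h01 hN)
      also have "\<dots> \<le> ennreal e"
        using le[of k] cN by (intro ennreal_leI) auto
      finally show "E_e M E (\<lambda>x. c * tail_sup h (k + N) x) \<le> ennreal e" .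
    qed
  qed
  then show ?thesis by (metis add_0 ennreal_le_epsilon le_zero_eq)
qed

end

lemma integrable_bounded_mult:
  fixes w h :: "'a \<Rightarrow> real"
  assumes w: "integrable M w" and h: "h \<in> borel_measurable M" and b: "\<And>x. \<bar>h x\<bar> \<le> 1"
  shows "integrable M (\<lambda>x. h x * w x)"
proof (rule Bochner_Integration.integrable_bound[OF w])
  show "(\<lambda>x. h x * w x) \<in> borel_measurable M" using h w by measurable
  show "AE x in M. norm (h x * w x) \<le> norm (w x)"
    using b by (intro AE_I2) (simp add: abs_mult mult_left_le_one_le)
qed

lemma integral_limsup_ge:
  fixes w :: "'a \<Rightarrow> real"
  assumes h01: "\<And>n x. 0 \<le> h n x \<and> h n x \<le> 1" and hm: "\<And>n. h n \<in> borel_measurable M"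
    and w: "integrable M w" and w0: "\<And>x. x \<in> space M \<Longrightarrow> 0 \<le> w x"
    and ge: "\<And>n. \<eta> \<le> integral\<^sup>L M (\<lambda>x. h n x * w x)"
  shows "\<eta> \<le> integral\<^sup>L M (\<lambda>x. (INF N. tail_sup h N x) * w x)"
proof -
  define H where "H x = (INF N. tail_sup h N x)" for x
  have Tm: "tail_sup h N \<in> borel_measurable M" for N by (rule measurable_tail_sup[OF h01 hm])
  have Hlim: "(\<lambda>N. tail_sup h N x) \<longlonglongrightarrow> H x" for x
    unfolding H_def by (rule tail_sup_LIMSEQ_limsup[OF h01])
  have Hm: "H \<in> borel_measurable M" by (rule borel_measurable_LIMSEQ_real[OF Hlim Tm])
  have Tb: "0 \<le> tail_sup h N x \<and> tail_sup h N x \<le> 1" for N x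
    using tail_sup_nonneg[of h, OF h01] tail_sup_le_1[of h, OF h01] by blast
  have "(\<lambda>N. integral\<^sup>L M (\<lambda>x. tail_sup h N x * w x)) \<longlonglongrightarrow> integral\<^sup>L M (\<lambda>x. H x * w x)"
  proof (rule integral_dominated_convergence[OF _ _ w])
    show "(\<lambda>x. H x * w x) \<in> borel_measurable M" "(\<lambda>x. tail_sup h N x * w x) \<in> borel_measurable M" for N
      using Hm Tm w by measurable
    show "AE x in M. (\<lambda>N. tail_sup h N x * w x) \<longlonglongrightarrow> H x * w x"
      by (intro AE_I2 tendsto_mult Hlim tendsto_const)
    show "AE x in M. norm (tail_sup h N x * w x) \<le> w x" for N
      using Tb w0 by (intro AE_I2 impI) (simp add: abs_mult mult_left_le_one_le)
  qed
  moreover have "\<eta> \<le> integral\<^sup>L M (\<lambda>x. tail_sup h N x * w x)" for N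
  proof -
    have "integral\<^sup>L M (\<lambda>x. h N x * w x) \<le> integral\<^sup>L M (\<lambda>x. tail_sup h N x * w x)"
      using h01 Tb tail_sup_ge[OF h01] w0
      by (intro integral_mono integrable_bounded_mult[OF w] hm Tm mult_right_mono) auto
    then show ?thesis using ge[of N] by simp
  qed
  ultimately show ?thesis unfolding H_def by (intro LIMSEQ_le_const) auto
qed

text \<open>The key step of (i) \<open>\<Longrightarrow>\<close> (iv): otherwise there are \<open>h n\<close> with values in
  \<open>[0, 1]\<close>, norm below \<open>2\<^sup>-\<^sup>n\<close> and weighted integral at least \<open>\<eta>\<close>. Their limes superior
  has zero energy at every scale, so it has norm zero, but weighted integral at least \<open>\<eta>\<close>.\<close>

lemma (in sigma_finite_nonlinear_dirichlet) weighted_integral_less_if_Le_norm_less: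
  fixes w :: "'a \<Rightarrow> real"
  assumes TK: "trivial_kernel M E" and w: "integrable M w" and w0: "\<And>x. x \<in> space M \<Longrightarrow> 0 \<le> w x"
    and \<eta>: "0 < \<eta>"
  shows "\<exists>\<delta>>0. \<forall>h\<in>ME M E. (\<forall>x. 0 \<le> h x \<and> h x \<le> 1) \<longrightarrow> Le_norm M E h < \<delta> \<longrightarrow>
            integral\<^sup>L M (\<lambda>x. h x * w x) < \<eta>"
proof (rule ccontr)
  assume "\<not> ?thesis"
  then have neg: "\<forall>\<delta>>0. \<exists>h\<in>ME M E. (\<forall>x. 0 \<le> h x \<and> h x \<le> 1) \<and> Le_norm M E h < \<delta> \<and>
            \<eta> \<le> integral\<^sup>L M (\<lambda>x. h x * w x)"
    by (simp add: not_less) (meson not_le)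
  have "\<exists>h. h \<in> ME M E \<and> (\<forall>x. 0 \<le> h x \<and> h x \<le> 1) \<and> Le_norm M E h < (1/2)^n \<and>
            \<eta> \<le> integral\<^sup>L M (\<lambda>x. h x * w x)" for n :: nat
    using neg[rule_format, of "(1/2)^n"] by auto
  then have "\<forall>n::nat. \<exists>h. h \<in> ME M E \<and> (\<forall>x. 0 \<le> h x \<and> h x \<le> 1) \<and> Le_norm M E h < (1/2)^n \<and>
            \<eta> \<le> integral\<^sup>L M (\<lambda>x. h x * w x)"
    by blast
  then obtain h where "\<forall>n. h n \<in> ME M E \<and> (\<forall>x. 0 \<le> h n x \<and> h n x \<le> 1) \<and>
      Le_norm M E (h n) < (1/2)^n \<and> \<eta> \<le> integral\<^sup>L M (\<lambda>x. h n x * w x)"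
    by (auto dest: choice)
  then have hME: "\<And>n. h n \<in> ME M E" and h01: "\<And>n x. 0 \<le> h n x \<and> h n x \<le> 1"
    and hN: "\<And>n. Le_norm M E (h n) < (1/2)^n" and h\<eta>: "\<And>n. \<eta> \<le> integral\<^sup>L M (\<lambda>x. h n x * w x)"
    by auto
  have hm: "h n \<in> borel_measurable M" for n using ME_measurable[OF hME] .
  define H where "H x = (INF N. tail_sup h N x)" for x
  have Hm: "H \<in> borel_measurable M"
    unfolding H_def
    by (rule borel_measurable_LIMSEQ_real[OF tail_sup_LIMSEQ_limsup measurable_tail_sup]) (use h01 hm in auto)
  have "E_e M E (\<lambda>x. c * H x) = 0" if "0 < c" for c
    unfolding H_def by (rule E_e_limsup_eq_0[OF hME h01 hN that])
  then have "H \<in> ME M E" "Le_norm M E H = 0"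
    using Le_norm_eq_0_if_E_e_cmult_eq_0[OF Hm] by blast+
  then have "AE x in M. H x = 0" using TK unfolding trivial_kernel_def by blast
  then have "integral\<^sup>L M (\<lambda>x. H x * w x) = 0"
    by (intro integral_eq_zero_AE) (auto elim: eventually_mono)
  moreover have "\<eta> \<le> integral\<^sup>L M (\<lambda>x. H x * w x)"
    unfolding H_def by (rule integral_limsup_ge[OF h01 hm w w0 h\<eta>])
  ultimately show False using \<eta> by simp
qed

section \<open>The weighted estimate\<close>

lemma powr_inverse_le_if_le_powr:
  fixes a b p :: real
  assumes "0 \<le> a" "0 \<le> b" "a \<le> b powr p" "0 < p"
  shows "a powr (1/p) \<le> b"
proof -
  have "a powr (1/p) \<le> (b powr p) powr (1/p)" using assms by (intro powr_mono2) auto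
  also have "\<dots> = b" using assms by (simp add: powr_powr)
  finally show ?thesis .
qed

lemma weighted_Lp_le_unit_trunc:
  fixes f w :: "'a \<Rightarrow> real"
  assumes f: "f \<in> Linf M" and s: "0 < sup_norm M f" and w: "integrable M w"
    and w0: "\<And>x. x \<in> space M \<Longrightarrow> 0 \<le> w x" and p: "1 \<le> p"
  shows "(integral\<^sup>L M (\<lambda>x. \<bar>f x\<bar> powr p * w x)) powr (1/p)
    \<le> sup_norm M f * (integral\<^sup>L M (\<lambda>x. unit_trunc (\<lambda>x. f x / sup_norm M f) x * w x)) powr (1/p)"
proof -
  define s where "s = sup_norm M f"
  define h where "h = unit_trunc (\<lambda>x. f x / s)"
  have mf: "f \<in> borel_measurable M" using f unfolding Linf_def by auto
  have ae: "AE x in M. \<bar>f x\<bar> \<le> s" unfolding s_def by (rule AE_abs_le_sup_norm[OF f])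
  have hm: "h \<in> borel_measurable M" unfolding h_def using mf by measurable
  have J0: "0 \<le> integral\<^sup>L M (\<lambda>x. h x * w x)"
    using w0 unfolding h_def by (intro Bochner_Integration.integral_nonneg) auto
  have le: "AE x in M. 0 \<le> \<bar>f x\<bar> powr p * w x \<and> \<bar>f x\<bar> powr p * w x \<le> s powr p * (h x * w x)"
    using ae AE_space
  proof eventually_elim
    case (elim x)
    have hx: "\<bar>f x\<bar> = s * h x" using elim s unfolding h_def s_def unit_trunc_def by (simp add: abs_divide)
    have "h x powr p \<le> h x" unfolding h_def using powr_mono'[of 1 p] p by (simp add: powr_one)
    then have "\<bar>f x\<bar> powr p \<le> s powr p * h x"
      unfolding hx using s unfolding s_def by (simp add: powr_mult)
    from mult_right_mono[OF this w0[OF elim(2)]] show ?case using w0[OF elim(2)] by (simp add: mult.assoc)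
  qed
  have int: "integrable M (\<lambda>x. s powr p * (h x * w x))"
    by (intro integrable_mult_right integrable_bounded_mult[OF w hm]) (simp add: h_def)
  have "AE x in M. norm (\<bar>f x\<bar> powr p * w x) \<le> norm (s powr p * (h x * w x))"
    using le by eventually_elim (metis abs_ge_self abs_of_nonneg order_trans real_norm_def)
  then have "integrable M (\<lambda>x. \<bar>f x\<bar> powr p * w x)"
    using mf w by (intro Bochner_Integration.integrable_bound[OF int]) auto
  then have "integral\<^sup>L M (\<lambda>x. \<bar>f x\<bar> powr p * w x) \<le> integral\<^sup>L M (\<lambda>x. s powr p * (h x * w x))"
    using le by (intro integral_mono_AE int) (auto elim!: eventually_mono)
  also have "\<dots> = (s * integral\<^sup>L M (\<lambda>x. h x * w x) powr (1/p)) powr p"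
    using s J0 p unfolding s_def by (simp add: powr_mult powr_powr)
  finally show ?thesis
    unfolding s_def[symmetric] h_def[symmetric] using s J0 p
    by (intro powr_inverse_le_if_le_powr) (auto simp: s_def intro!: Bochner_Integration.integral_nonneg w0 mult_nonneg_nonneg)
qed

context nonlinear_dirichlet
begin

lemma unit_trunc_div:
  assumes f: "f \<in> ME M E" and s: "0 < s"
  shows "unit_trunc (\<lambda>x. f x / s) \<in> ME M E" "Le_norm M E (unit_trunc (\<lambda>x. f x / s)) \<le> Le_norm M E f / s"
proof -
  have fs: "(\<lambda>x. f x / s) \<in> ME M E" "Le_norm M E (\<lambda>x. f x / s) = Le_norm M E f / s"
    unfolding div_eq_inverse_mult using ME_cmult[OF f] Le_norm_cmult[OF f] s
    by (auto simp: divide_inverse_commute)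
  show "unit_trunc (\<lambda>x. f x / s) \<in> ME M E" by (rule ME_unit_trunc[OF fs(1)])
  show "Le_norm M E (unit_trunc (\<lambda>x. f x / s)) \<le> Le_norm M E f / s"
    using Le_norm_unit_trunc_le[OF fs(1)] fs(2) by simp
qed

text \<open>The truncation of \<open>f / \<parallel>f\<parallel>\<^sub>\<infinity>\<close> either has norm below \<open>\<delta>\<close>, and then the weighted
  norm of \<open>f\<close> is at most \<open>r \<parallel>f\<parallel>\<^sub>\<infinity>\<close>, or \<open>\<parallel>f\<parallel>\<^sub>\<infinity> \<le> \<parallel>f\<parallel>\<^sub>L\<^sub>e / \<delta>\<close>.\<close>

lemma weighted_Lp_le_if_small_unit_trunc:
  fixes w :: "'a \<Rightarrow> real"
  assumes w: "integrable M w" and w0: "\<And>x. x \<in> space M \<Longrightarrow> 0 \<le> w x"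
    and p: "1 \<le> p" and r: "0 < r" and \<delta>: "0 < \<delta>"
    and small: "\<And>h. h \<in> ME M E \<Longrightarrow> (\<forall>x. 0 \<le> h x \<and> h x \<le> 1) \<Longrightarrow>
      Le_norm M E h < \<delta> \<Longrightarrow> integral\<^sup>L M (\<lambda>x. h x * w x) < r powr p"
    and fME: "f \<in> ME M E" and fL: "f \<in> Linf M"
  shows "(integral\<^sup>L M (\<lambda>x. \<bar>f x\<bar> powr p * w x)) powr (1 / p)
    \<le> (integral\<^sup>L M w) powr (1/p) / \<delta> * Le_norm M E f + r * sup_norm M f"
proof -
  define W where "W = (integral\<^sup>L M w) powr (1/p)"
  define s where "s = sup_norm M f"
  define I where "I = (integral\<^sup>L M (\<lambda>x. \<bar>f x\<bar> powr p * w x)) powr (1 / p)"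
  have mf: "f \<in> borel_measurable M" by (rule ME_measurable[OF fME])
  have W0: "0 \<le> W" unfolding W_def by simp
  have Nf: "0 \<le> Le_norm M E f" by (rule Le_norm_nonneg[OF fME])
  consider "s = 0" | "0 < s" using sup_norm_nonneg[OF mf] unfolding s_def by linarith
  then have "I \<le> W / \<delta> * Le_norm M E f + r * s"
  proof cases
    case 1
    have "AE x in M. \<bar>f x\<bar> powr p * w x = 0"
      using AE_abs_le_sup_norm[OF fL] unfolding s_def[symmetric] 1 by (auto elim: eventually_mono)
    then have "I = 0" unfolding I_def by (simp add: integral_eq_zero_AE)
    then show ?thesis using 1 Nf \<delta> W0 by simp
  next
    case 2
    define h where "h = unit_trunc (\<lambda>x. f x / s)"
    define J where "J = integral\<^sup>L M (\<lambda>x. h x * w x)"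
    have hm: "h \<in> borel_measurable M" unfolding h_def using mf by measurable
    have hME: "h \<in> ME M E" and hN: "Le_norm M E h \<le> Le_norm M E f / s"
      unfolding h_def using unit_trunc_div[OF fME 2] by auto
    have J0: "0 \<le> J" unfolding J_def h_def using w0 by (auto intro: Bochner_Integration.integral_nonneg)
    have IJ: "I \<le> s * J powr (1/p)"
      using weighted_Lp_le_unit_trunc[OF fL _ w w0 p] 2 unfolding I_def J_def h_def s_def by simp
    show ?thesis
    proof (cases "Le_norm M E h < \<delta>")
      case True
      have "J < r powr p" unfolding J_def by (rule small[OF hME _ True]) (simp add: h_def)
      then have "J powr (1/p) \<le> (r powr p) powr (1/p)" using J0 p by (intro powr_mono2) auto
      then have "J powr (1/p) \<le> r" using r p by (simp add: powr_powr)
      then have "I \<le> s * r" using IJ 2 by (meson mult_left_mono less_imp_le order_trans)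
      then show ?thesis using Nf W0 \<delta> by (simp add: mult.commute add_increasing)
    next
      case False
      then have "\<delta> * s \<le> Le_norm M E h * s" using 2 by (intro mult_right_mono) auto
      also have "\<dots> \<le> Le_norm M E f" using hN 2 by (simp add: field_simps)
      finally have "s \<le> Le_norm M E f / \<delta>" using \<delta> by (simp add: field_simps)
      moreover have "J \<le> integral\<^sup>L M w"
        unfolding J_def using w0 hm
        by (intro integral_mono integrable_bounded_mult[OF w] w) (auto simp: h_def mult_left_le_one_le)
      then have "J powr (1/p) \<le> W" unfolding W_def using J0 p by (intro powr_mono2) auto
      ultimately have "I \<le> Le_norm M E f / \<delta> * W"
        using IJ 2 W0 by (meson mult_mono less_imp_le order_trans powr_ge_zero)
      then show ?thesis using mult_pos_pos[OF r 2] by (simp add: field_simps)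
    qed
  qed
  then show ?thesis unfolding I_def W_def s_def .
qed

end

lemma (in sigma_finite_nonlinear_dirichlet) weighted_estimate_at:
  fixes w :: "'a \<Rightarrow> real"
  assumes TK: "trivial_kernel M E" and w: "integrable M w" and w0: "\<And>x. x \<in> space M \<Longrightarrow> 0 \<le> w x"
    and p: "1 \<le> p" and r: "0 < r"
  shows "\<exists>C\<ge>1. \<forall>f\<in>ME M E \<inter> Linf M.
    (integral\<^sup>L M (\<lambda>x. \<bar>f x\<bar> powr p * w x)) powr (1 / p) \<le> C * Le_norm M E f + r * sup_norm M f"
proof -
  obtain \<delta> where \<delta>: "0 < \<delta>" and small: "\<And>h. h \<in> ME M E \<Longrightarrow> (\<forall>x. 0 \<le> h x \<and> h x \<le> 1) \<Longrightarrow>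
      Le_norm M E h < \<delta> \<Longrightarrow> integral\<^sup>L M (\<lambda>x. h x * w x) < r powr p"
    using weighted_integral_less_if_Le_norm_less[OF TK w w0, of "r powr p"] r by auto
  define C where "C = (integral\<^sup>L M w) powr (1/p) / \<delta> + 1"
  show ?thesis
  proof (intro exI[of _ C] conjI ballI)
    show "1 \<le> C" unfolding C_def using \<delta> by simp
    fix f assume f: "f \<in> ME M E \<inter> Linf M"
    then have "(integral\<^sup>L M w) powr (1/p) / \<delta> * Le_norm M E f \<le> C * Le_norm M E f"
      unfolding C_def by (intro mult_right_mono Le_norm_nonneg) auto
    moreover have "(integral\<^sup>L M (\<lambda>x. \<bar>f x\<bar> powr p * w x)) powr (1 / p)
        \<le> (integral\<^sup>L M w) powr (1/p) / \<delta> * Le_norm M E f + r * sup_norm M f"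
      using f by (intro weighted_Lp_le_if_small_unit_trunc[OF w w0 p r \<delta> small]) auto
    ultimately show "(integral\<^sup>L M (\<lambda>x. \<bar>f x\<bar> powr p * w x)) powr (1 / p)
        \<le> C * Le_norm M E f + r * sup_norm M f"
      by linarith
  qed
qed

text \<open>Each admissible constant for \<open>r\<close> is admissible for every larger \<open>s\<close>, so the
  infimum of the admissible constants is a decreasing choice.\<close>

lemma decreasing_constant_choice:
  fixes A N S :: "'f \<Rightarrow> real"
  assumes ex: "\<And>r. 0 < r \<Longrightarrow> \<exists>C\<ge>1. \<forall>f\<in>F. A f \<le> C * N f + r * S f"
    and N: "\<And>f. f \<in> F \<Longrightarrow> 0 \<le> N f" and S: "\<And>f. f \<in> F \<Longrightarrow> 0 \<le> S f"
  shows "\<exists>\<alpha>. (\<forall>r>0. 0 < \<alpha> r) \<and> (\<forall>r s. 0 < r \<and> r \<le> s \<longrightarrow> \<alpha> s \<le> \<alpha> r) \<and>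
    (\<forall>r>0. \<forall>f\<in>F. A f \<le> \<alpha> r * N f + r * S f)"
proof -
  define V where "V r = {C. 1 \<le> C \<and> (\<forall>f\<in>F. A f \<le> C * N f + r * S f)}" for r
  have Vne: "V r \<noteq> {}" if "0 < r" for r using ex[OF that] unfolding V_def by auto
  have Vbdd: "bdd_below (V r)" for r unfolding V_def by (rule bdd_belowI[of _ 1]) auto
  have "1 \<le> Inf (V r)" if "0 < r" for r
    by (rule cInf_greatest[OF Vne[OF that]]) (auto simp: V_def)
  moreover have "Inf (V s) \<le> Inf (V r)" if "0 < r" "r \<le> s" for r s
  proof (rule cInf_superset_mono[OF Vne[OF that(1)] Vbdd])
    have "r * S f \<le> s * S f" if "f \<in> F" for f
      using mult_right_mono[OF \<open>r \<le> s\<close> S[OF that]] .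
    then show "V r \<subseteq> V s"
      unfolding V_def by (force intro: order_trans)
  qed
  moreover have "A f \<le> Inf (V r) * N f + r * S f" if r: "0 < r" and f: "f \<in> F" for r f
  proof (cases "N f = 0")
    case True
    then show ?thesis using Vne[OF r] f unfolding V_def by force
  next
    case False
    then have Np: "0 < N f" using N[OF f] by simp
    have "(A f - r * S f) / N f \<le> Inf (V r)"
      using f Np by (intro cInf_greatest[OF Vne[OF r]]) (auto simp: V_def pos_divide_le_eq)
    then show ?thesis using Np by (simp add: pos_divide_le_eq)
  qed
  ultimately show ?thesis
    by (intro exI[of _ "\<lambda>r. Inf (V r)"]) (auto intro: less_le_trans[OF zero_less_one])
qed

lemma (in sigma_finite_nonlinear_dirichlet) weighted_estimate_if_trivial_kernel:
  assumes TK: "trivial_kernel M E" and w: "admissible_weight M w" and p: "1 \<le> p"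
  shows "weighted_estimate M E w p"
  unfolding weighted_estimate_def
proof (rule decreasing_constant_choice)
  show "\<exists>C\<ge>1. \<forall>f\<in>ME M E \<inter> Linf M. (integral\<^sup>L M (\<lambda>x. \<bar>f x\<bar> powr p * w x)) powr (1 / p)
      \<le> C * Le_norm M E f + r * sup_norm M f" if "0 < r" for r
    using w that by (intro weighted_estimate_at[OF TK _ _ p]) (auto simp: admissible_weight_def less_imp_le)
qed (auto simp: Le_norm_nonneg sup_norm_nonneg Linf_def)

lemma (in nonlinear_dirichlet) trivial_kernel_if_weighted_estimate:
  assumes w: "admissible_weight M w" and p: "1 \<le> p" and est: "weighted_estimate M E w p"
  shows "trivial_kernel M E"
  unfolding trivial_kernel_def
proof (intro ballI impI)
  fix f assume f: "f \<in> ME M E" and Nf: "Le_norm M E f = 0"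
  have wi: "integrable M w" and wpos: "\<And>x. x \<in> space M \<Longrightarrow> 0 < w x"
    using w unfolding admissible_weight_def by auto
  define h where "h = unit_trunc f"
  have hME: "h \<in> ME M E" and hL: "h \<in> Linf M" and hS: "sup_norm M h \<le> 1"
    unfolding h_def using ME_unit_trunc[OF f] Linf_unit_trunc sup_norm_unit_trunc_le ME_measurable[OF f]
    by auto
  have hN: "Le_norm M E h = 0"
    using Le_norm_unit_trunc_le[OF f] Le_norm_nonneg[OF hME] Nf unfolding h_def by simp
  obtain \<alpha> where \<alpha>: "\<And>r. 0 < r \<Longrightarrow>
      (integral\<^sup>L M (\<lambda>x. \<bar>h x\<bar> powr p * w x)) powr (1 / p) \<le> \<alpha> r * Le_norm M E h + r * sup_norm M h"
    using est hME hL unfolding weighted_estimate_def by blast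
  define I where "I = integral\<^sup>L M (\<lambda>x. \<bar>h x\<bar> powr p * w x)"
  have "I powr (1 / p) \<le> r" if "0 < r" for r
    using \<alpha>[OF that] hN mult_left_mono[OF hS less_imp_le[OF that]] unfolding I_def by simp
  then have "I powr (1 / p) \<le> 0" by (rule field_le_epsilon) simp
  then have I0: "I = 0" using powr_ge_zero[of I "1/p"] by simp
  have hw: "integrable M (\<lambda>x. \<bar>h x\<bar> powr p * w x)"
    using p ME_measurable[OF hME]
    by (intro integrable_bounded_mult[OF wi]) (auto simp: h_def powr_le1 )
  have "AE x in M. \<bar>h x\<bar> powr p * w x = 0"
    using I0 integral_nonneg_eq_0_iff_AE[OF hw] wpos unfolding I_def
    by (auto intro!: AE_I2 simp: less_imp_le)
  then show "AE x in M. f x = 0"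
    using AE_space by eventually_elim (use wpos in \<open>force simp: h_def\<close>)
qed

section \<open>Continuity of the embedding and completeness\<close>

lemma (in sigma_finite_measure) admissible_weight_exists:
  obtains w where "admissible_weight M w" "w \<in> borel_measurable M"
proof (rule obtain_positive_integrable_function)
  fix w :: "'a \<Rightarrow> real" assume "w \<in> borel_measurable M" "\<And>x. 0 < w x" "integrable M w"
  then show thesis by (intro that[of w]) (auto simp: admissible_weight_def)
qed

lemma (in nonlinear_dirichlet) weighted_integral_unit_trunc_le:
  assumes w: "admissible_weight M w" and est: "weighted_estimate M E w 1"
  shows "\<exists>\<alpha>. (\<forall>r>0. 0 < \<alpha> r) \<and>
    (\<forall>r>0. \<forall>d\<in>ME M E. integral\<^sup>L M (\<lambda>x. unit_trunc d x * w x) \<le> \<alpha> r * Le_norm M E d + r)"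
proof -
  obtain \<alpha> where \<alpha>0: "\<And>r. 0 < r \<Longrightarrow> 0 < \<alpha> r" and \<alpha>: "\<And>r h. 0 < r \<Longrightarrow> h \<in> ME M E \<inter> Linf M \<Longrightarrow>
      (integral\<^sup>L M (\<lambda>x. \<bar>h x\<bar> powr 1 * w x)) powr (1 / 1) \<le> \<alpha> r * Le_norm M E h + r * sup_norm M h"
    using est unfolding weighted_estimate_def by blast
  have "integral\<^sup>L M (\<lambda>x. unit_trunc d x * w x) \<le> \<alpha> r * Le_norm M E d + r"
    if r: "0 < r" and d: "d \<in> ME M E" for r d
  proof -
    have dm: "d \<in> borel_measurable M" by (rule ME_measurable[OF d])
    have "0 \<le> integral\<^sup>L M (\<lambda>x. unit_trunc d x * w x)"
      using w by (intro Bochner_Integration.integral_nonneg) (auto simp: admissible_weight_def)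
    then have "integral\<^sup>L M (\<lambda>x. unit_trunc d x * w x)
        \<le> \<alpha> r * Le_norm M E (unit_trunc d) + r * sup_norm M (unit_trunc d)"
      using \<alpha>[OF r, of "unit_trunc d"] ME_unit_trunc[OF d] Linf_unit_trunc[OF dm] by simp
    also have "\<dots> \<le> \<alpha> r * Le_norm M E d + r * 1"
      using \<alpha>0[OF r] r Le_norm_unit_trunc_le[OF d] sup_norm_unit_trunc_le[OF dm]
      by (intro add_mono mult_left_mono) auto
    finally show ?thesis by simp
  qed
  with \<alpha>0 show ?thesis by blast
qed

lemma loc_conv_in_measure_if_unit_trunc:
  assumes lim: "loc_conv_in_measure M (\<lambda>n. unit_trunc (\<lambda>x. u n x - f x)) (\<lambda>x. 0)"
    and um: "\<And>n. u n \<in> borel_measurable M" and fm: "f \<in> borel_measurable M"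
  shows "loc_conv_in_measure M u f"
  unfolding loc_conv_in_measure_def
proof (intro ballI impI allI)
  fix A \<epsilon> assume A: "A \<in> sets M" "emeasure M A < \<infinity>" and e: "(0::real) < \<epsilon>"
  define T where "T n = {x \<in> space M. min \<epsilon> (1/2) < \<bar>unit_trunc (\<lambda>x. u n x - f x) x - 0\<bar>} \<inter> A" for n
  have T0: "(\<lambda>n. emeasure M (T n)) \<longlonglongrightarrow> 0"
    using lim A e unfolding loc_conv_in_measure_def T_def by simp
  have le: "emeasure M ({x \<in> space M. \<epsilon> < \<bar>u n x - f x\<bar>} \<inter> A) \<le> emeasure M (T n)" for n
  proof (rule emeasure_mono)
    have "min \<epsilon> (1/2) < \<bar>min \<bar>t\<bar> 1 - 0\<bar>" if "\<epsilon> < \<bar>t\<bar>" for t :: real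
      using that by linarith
    then show "{x \<in> space M. \<epsilon> < \<bar>u n x - f x\<bar>} \<inter> A \<subseteq> T n"
      unfolding T_def unit_trunc_def by blast
    show "T n \<in> sets M" unfolding T_def using A(1) um fm by measurable
  qed
  show "(\<lambda>n. emeasure M ({x \<in> space M. \<epsilon> < \<bar>u n x - f x\<bar>} \<inter> A)) \<longlonglongrightarrow> 0"
    by (rule tendsto_sandwich[OF _ _ tendsto_const T0]) (use le in auto)
qed

context sigma_finite_nonlinear_dirichlet
begin

lemma embedding_continuous_if_trivial_kernel:
  assumes TK: "trivial_kernel M E"
  shows "embedding_continuous M E"
  unfolding embedding_continuous_def
proof (intro allI impI, elim conjE)
  fix u f assume u: "\<forall>n. u n \<in> ME M E" and f: "f \<in> ME M E"
    and lim: "(\<lambda>n. Le_norm M E (\<lambda>x. u n x - f x)) \<longlonglongrightarrow> 0"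
  obtain w where w: "admissible_weight M w" and wm: "w \<in> borel_measurable M"
    by (rule admissible_weight_exists)
  have wi: "integrable M w" and wpos: "\<And>x. x \<in> space M \<Longrightarrow> 0 < w x"
    using w unfolding admissible_weight_def by auto
  obtain \<alpha> where \<alpha>0: "\<And>r. 0 < r \<Longrightarrow> 0 < \<alpha> r" and \<alpha>: "\<And>r d. 0 < r \<Longrightarrow> d \<in> ME M E \<Longrightarrow>
      integral\<^sup>L M (\<lambda>x. unit_trunc d x * w x) \<le> \<alpha> r * Le_norm M E d + r"
    using weighted_integral_unit_trunc_le[OF w weighted_estimate_if_trivial_kernel[OF TK w]] by auto
  define d where "d n = (\<lambda>x. u n x - f x)" for n
  have d: "d n \<in> ME M E" for n unfolding d_def using u f by (auto intro: ME_diff)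
  have dm: "d n \<in> borel_measurable M" for n using ME_measurable[OF d] .
  have "(\<lambda>n. integral\<^sup>L M (\<lambda>x. unit_trunc (d n) x * w x)) \<longlonglongrightarrow> 0"
  proof (rule order_tendstoI)
    fix a :: real assume a: "0 < a"
    define r where "r = a / 2"
    have r: "0 < r" "r < a" unfolding r_def using a by auto
    have "eventually (\<lambda>n. Le_norm M E (d n) < r / \<alpha> r) sequentially"
      using lim r \<alpha>0[OF r(1)] unfolding d_def by (intro order_tendstoD(2)) auto
    then show "eventually (\<lambda>n. integral\<^sup>L M (\<lambda>x. unit_trunc (d n) x * w x) < a) sequentially"
    proof (rule eventually_mono)
      fix n assume "Le_norm M E (d n) < r / \<alpha> r"
      then have "\<alpha> r * Le_norm M E (d n) < r" using \<alpha>0[OF r(1)] by (simp add: field_simps)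
      then show "integral\<^sup>L M (\<lambda>x. unit_trunc (d n) x * w x) < a" using \<alpha>[OF r(1) d[of n]] r_def by linarith
    qed
  next
    fix a :: real assume "a < 0"
    then show "eventually (\<lambda>n. a < integral\<^sup>L M (\<lambda>x. unit_trunc (d n) x * w x)) sequentially"
      using wpos by (intro always_eventually allI less_le_trans[OF _ Bochner_Integration.integral_nonneg])
        (auto simp: less_imp_le)
  qed
  then have "loc_conv_in_measure M (\<lambda>n. unit_trunc (d n)) (\<lambda>x. 0)"
    using wm wpos dm wi by (intro loc_conv_in_measure_of_weighted_integral integrable_bounded_mult) auto
  then show "loc_conv_in_measure M u f"
    unfolding d_def by (rule loc_conv_in_measure_if_unit_trunc) (use ME_measurable u f in blast)+
qed

lemma trivial_kernel_if_embedding_continuous: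
  assumes "embedding_continuous M E"
  shows "trivial_kernel M E"
  unfolding trivial_kernel_def
proof (intro ballI impI)
  fix f assume f: "f \<in> ME M E" and "Le_norm M E f = 0"
  then have "loc_conv_in_measure M (\<lambda>n. f) (\<lambda>x. 0)"
    using assms ME_zero unfolding embedding_continuous_def by simp
  then show "AE x in M. f x = 0"
    by (rule loc_conv_in_measure_const_zero_imp_AE[OF ME_measurable[OF f]])
qed

end

lemma fast_Cauchy_subseq:
  fixes d :: "nat \<Rightarrow> nat \<Rightarrow> real"
  assumes Cauchy: "\<forall>\<epsilon>>0. \<exists>K. \<forall>m\<ge>K. \<forall>n\<ge>K. d m n < \<epsilon>" and e: "\<And>j. 0 < e j"
  shows "\<exists>\<sigma>. strict_mono \<sigma> \<and> (\<forall>j. d (\<sigma> (Suc j)) (\<sigma> j) < e j)"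
proof -
  define K where "K j = (SOME K. \<forall>m\<ge>K. \<forall>n\<ge>K. d m n < e j)" for j
  have K: "d m n < e j" if "K j \<le> m" "K j \<le> n" for j m n
    using someI_ex[OF Cauchy[rule_format, OF e[of j]]] that unfolding K_def by blast
  define \<sigma> where "\<sigma> j = j + (\<Sum>i\<le>j. K i)" for j
  have "strict_mono \<sigma>" unfolding strict_mono_Suc_iff \<sigma>_def by simp
  moreover have "K j \<le> \<sigma> j" "K j \<le> \<sigma> (Suc j)" for j
    unfolding \<sigma>_def using member_le_sum[of j "{..j}" K] member_le_sum[of j "{..Suc j}" K] by auto
  ultimately show ?thesis using K by blast
qed

lemma convergent_if_summable_unit_trunc_diff:
  assumes "summable (\<lambda>j. unit_trunc (\<lambda>x. v (Suc j) x - v j x) x)"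
  shows "convergent (\<lambda>j. v j x)"
proof -
  define \<Delta> where "\<Delta> j = v (Suc j) x - v j x" for j
  have "(\<lambda>j. unit_trunc (\<lambda>x. v (Suc j) x - v j x) x) \<longlonglongrightarrow> 0"
    by (rule summable_LIMSEQ_zero[OF assms])
  then have "eventually (\<lambda>j. unit_trunc (\<lambda>x. v (Suc j) x - v j x) x < 1) sequentially"
    by (rule order_tendstoD(2)) simp
  then have "eventually (\<lambda>j. \<bar>\<Delta> j\<bar> = unit_trunc (\<lambda>x. v (Suc j) x - v j x) x) sequentially"
    by (rule eventually_mono) (auto simp: \<Delta>_def unit_trunc_def)
  then have "summable (\<lambda>j. \<bar>\<Delta> j\<bar>)" using assms by (simp add: summable_cong)
  then have "summable \<Delta>" by (rule summable_rabs_cancel)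
  then have "(\<lambda>j. v 0 x + (\<Sum>i<j. \<Delta> i)) \<longlonglongrightarrow> v 0 x + (\<Sum>i. \<Delta> i)"
    by (intro tendsto_add tendsto_const summable_LIMSEQ)
  moreover have "v 0 x + (\<Sum>i<j. \<Delta> i) = v j x" for j
    unfolding \<Delta>_def by (induction j) auto
  ultimately show ?thesis unfolding convergent_def by auto
qed

lemma AE_convergent_if_weighted_unit_trunc_summable:
  fixes w :: "'a \<Rightarrow> real"
  assumes w: "admissible_weight M w" and vm: "\<And>j. v j \<in> borel_measurable M"
    and b: "\<And>j. integral\<^sup>L M (\<lambda>x. unit_trunc (\<lambda>x. v (Suc j) x - v j x) x * w x) \<le> b j"
    and sb: "summable b"
  shows "AE x in M. convergent (\<lambda>j. v j x)"
proof -
  have wi: "integrable M w" and wpos: "\<And>x. x \<in> space M \<Longrightarrow> 0 < w x"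
    using w unfolding admissible_weight_def by auto
  define T where "T j x = unit_trunc (\<lambda>x. v (Suc j) x - v j x) x * w x" for j x
  have Tm: "(\<lambda>x. ennreal (T j x)) \<in> borel_measurable M" for j
    unfolding T_def using vm wi by measurable
  have Ti: "integrable M (T j)" for j
    unfolding T_def using vm by (intro integrable_bounded_mult[OF wi]) auto
  have T0: "x \<in> space M \<Longrightarrow> 0 \<le> T j x" for j x unfolding T_def using wpos by (simp add: less_imp_le)
  have "(\<integral>\<^sup>+ x. (\<Sum>j. ennreal (T j x)) \<partial>M) = (\<Sum>j. \<integral>\<^sup>+ x. ennreal (T j x) \<partial>M)"
    by (rule nn_integral_suminf[OF Tm])
  also have "\<dots> = (\<Sum>j. ennreal (integral\<^sup>L M (T j)))"
    using Ti T0 by (subst nn_integral_eq_integral) (auto intro: AE_I2)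
  also have "\<dots> \<le> (\<Sum>j. ennreal (b j))"
    using b unfolding T_def by (intro suminf_le ennreal_leI) auto
  also have "\<dots> < \<infinity>"
    using sb b Ti T0 order_trans[OF Bochner_Integration.integral_nonneg b]
    by (subst suminf_ennreal2) (auto simp: T_def)
  finally have "AE x in M. (\<Sum>j. ennreal (T j x)) \<noteq> \<infinity>"
    by (intro nn_integral_PInf_AE) (use Tm in auto)
  then show ?thesis
    using AE_space
  proof eventually_elim
    case (elim x)
    then have "summable (\<lambda>j. T j x)"
      using T0 by (intro summable_suminf_not_top) auto
    then have "summable (\<lambda>j. T j x * (1 / w x))" by (rule summable_mult2)
    then have "summable (\<lambda>j. unit_trunc (\<lambda>x. v (Suc j) x - v j x) x)"
      using wpos[OF elim(2)] unfolding T_def by simp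
    then show ?case by (rule convergent_if_summable_unit_trunc_diff)
  qed
qed

context sigma_finite_nonlinear_dirichlet
begin

lemma Le_norm_le_if_AE_tendsto:
  assumes v: "\<And>j. v j \<in> ME M E" and g: "g \<in> borel_measurable M"
    and lim: "AE x in M. (\<lambda>j. v j x) \<longlonglongrightarrow> g x" and bd: "\<And>j. Le_norm M E (v j) \<le> \<epsilon>"
  shows "g \<in> ME M E" "Le_norm M E g \<le> \<epsilon>"
proof -
  have vm: "v j \<in> borel_measurable M" for j using ME_measurable[OF v] .
  have "l \<in> Le_levels M E g" if l: "\<epsilon> < l" for l
  proof -
    have l0: "0 < l" using l bd[of 0] Le_norm_nonneg[OF v] by (meson le_less_trans)
    have "E_e M E (\<lambda>x. g x / l) \<le> 1"
    proof (rule E_e_lsc[of "\<lambda>j x. v j x / l"])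
      show "loc_conv_in_measure M (\<lambda>j x. v j x / l) (\<lambda>x. g x / l)"
        using lim vm g l0 by (intro AE_tendsto_imp_loc_conv_in_measure)
          (auto elim!: eventually_mono intro!: tendsto_divide tendsto_const)
      show "E_e M E (\<lambda>x. v j x / l) \<le> 1" for j
        using bd[of j] l by (intro E_e_div_le_if_Le_norm_less v) auto
    qed (use vm g in auto)
    then show ?thesis unfolding Le_levels_def using l0 by simp
  qed
  moreover have "0 \<le> \<epsilon>" using bd[of 0] Le_norm_nonneg[OF v] by (meson order_trans)
  ultimately show "g \<in> ME M E" "Le_norm M E g \<le> \<epsilon>"
    by (auto intro: ME_if_in_Le_levels[OF g, of "\<epsilon> + 1"] Le_norm_leI)
qed

text \<open>Increments of norm below \<open>2\<^sup>-\<^sup>j / \<alpha>(2\<^sup>-\<^sup>j)\<close> have truncations of weighted integral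
  at most \<open>2 \<cdot> 2\<^sup>-\<^sup>j\<close>, by the weighted estimate for \<open>p = 1\<close>.\<close>

lemma AE_convergent_subseq_if_trivial_kernel:
  fixes u :: "nat \<Rightarrow> 'a \<Rightarrow> real"
  assumes TK: "trivial_kernel M E" and u: "\<And>n. u n \<in> ME M E"
    and Cauchy: "\<forall>\<epsilon>>0. \<exists>K. \<forall>m\<ge>K. \<forall>n\<ge>K. Le_norm M E (\<lambda>x. u m x - u n x) < \<epsilon>"
  shows "\<exists>\<sigma>. strict_mono \<sigma> \<and> (AE x in M. convergent (\<lambda>j. u (\<sigma> j) x))"
proof -
  obtain w where w: "admissible_weight M w" by (rule admissible_weight_exists)
  obtain \<alpha> where \<alpha>0: "\<And>r. 0 < r \<Longrightarrow> 0 < \<alpha> r" and \<alpha>: "\<And>r d. 0 < r \<Longrightarrow> d \<in> ME M E \<Longrightarrow>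
      integral\<^sup>L M (\<lambda>x. unit_trunc d x * w x) \<le> \<alpha> r * Le_norm M E d + r"
    using weighted_integral_unit_trunc_le[OF w weighted_estimate_if_trivial_kernel[OF TK w]] by auto
  obtain \<sigma> where \<sigma>: "strict_mono \<sigma>"
    and fast: "\<And>j. Le_norm M E (\<lambda>x. u (\<sigma> (Suc j)) x - u (\<sigma> j) x) < (1/2)^j / \<alpha> ((1/2)^j)"
    using fast_Cauchy_subseq[OF Cauchy, of "\<lambda>j. (1/2)^j / \<alpha> ((1/2)^j)"] \<alpha>0 by auto
  have "integral\<^sup>L M (\<lambda>x. unit_trunc (\<lambda>x. u (\<sigma> (Suc j)) x - u (\<sigma> j) x) x * w x) \<le> 2 * (1/2)^j" for j
  proof -
    have "\<alpha> ((1/2)^j) * Le_norm M E (\<lambda>x. u (\<sigma> (Suc j)) x - u (\<sigma> j) x) \<le> (1/2)^j"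
      using fast[of j] \<alpha>0[of "(1/2)^j"] by (simp add: field_simps)
    moreover have "integral\<^sup>L M (\<lambda>x. unit_trunc (\<lambda>x. u (\<sigma> (Suc j)) x - u (\<sigma> j) x) x * w x)
        \<le> \<alpha> ((1/2)^j) * Le_norm M E (\<lambda>x. u (\<sigma> (Suc j)) x - u (\<sigma> j) x) + (1/2)^j"
      by (rule \<alpha>) (auto intro: ME_diff u)
    ultimately show ?thesis by simp
  qed
  then have "AE x in M. convergent (\<lambda>j. u (\<sigma> j) x)"
    using ME_measurable[OF u]
    by (intro AE_convergent_if_weighted_unit_trunc_summable[OF w, where b = "\<lambda>j. 2 * (1/2)^j"])
      (auto intro: summable_mult summable_geometric)
  with \<sigma> show ?thesis by blast
qed

lemma complete_if_trivial_kernel: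
  fixes u :: "nat \<Rightarrow> 'a \<Rightarrow> real"
  assumes TK: "trivial_kernel M E" and u: "\<And>n. u n \<in> ME M E"
    and Cauchy: "\<forall>\<epsilon>>0. \<exists>K. \<forall>m\<ge>K. \<forall>n\<ge>K. Le_norm M E (\<lambda>x. u m x - u n x) < \<epsilon>"
  shows "\<exists>f\<in>ME M E. (\<lambda>n. Le_norm M E (\<lambda>x. u n x - f x)) \<longlonglongrightarrow> 0"
proof -
  have um: "u n \<in> borel_measurable M" for n using ME_measurable[OF u] .
  obtain \<sigma> where \<sigma>: "strict_mono \<sigma>" and conv: "AE x in M. convergent (\<lambda>j. u (\<sigma> j) x)"
    using AE_convergent_subseq_if_trivial_kernel[OF TK u Cauchy] by blast
  then have flim: "AE x in M. (\<lambda>j. u (\<sigma> j) x) \<longlonglongrightarrow> lim (\<lambda>j. u (\<sigma> j) x)"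
    by (auto elim: eventually_mono simp: convergent_LIMSEQ_iff)
  define f where "f x = lim (\<lambda>j. u (\<sigma> j) x)" for x
  have fm: "f \<in> borel_measurable M" unfolding f_def using um by measurable
  have near: "(\<lambda>x. u n x - f x) \<in> ME M E \<and> Le_norm M E (\<lambda>x. u n x - f x) \<le> \<epsilon>"
    if "0 < \<epsilon>" "\<forall>m\<ge>K. \<forall>n\<ge>K. Le_norm M E (\<lambda>x. u m x - u n x) < \<epsilon>" "K \<le> n" for \<epsilon> K n
  proof -
    have lim: "AE x in M. (\<lambda>j. u n x - u (\<sigma> (j + K)) x) \<longlonglongrightarrow> u n x - f x"
      using flim unfolding f_def
      by eventually_elim (intro tendsto_diff tendsto_const LIMSEQ_ignore_initial_segment)
    have bd: "Le_norm M E (\<lambda>x. u n x - u (\<sigma> (j + K)) x) \<le> \<epsilon>" for j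
      using that seq_suble[OF \<sigma>, of "j + K"] by (auto intro: less_imp_le)
    have v: "(\<lambda>x. u n x - u (\<sigma> (j + K)) x) \<in> ME M E" for j by (intro ME_diff u)
    have "(\<lambda>x. u n x - f x) \<in> borel_measurable M" using um fm by measurable
    from Le_norm_le_if_AE_tendsto[OF v this lim bd] show ?thesis by blast
  qed
  obtain K1 where "\<forall>m\<ge>K1. \<forall>n\<ge>K1. Le_norm M E (\<lambda>x. u m x - u n x) < 1" using Cauchy by force
  then have "(\<lambda>x. u K1 x - f x) \<in> ME M E" using near[of 1 K1 K1] by auto
  from ME_diff[OF u[of K1] this] have fME: "f \<in> ME M E" by simp
  have "(\<lambda>n. Le_norm M E (\<lambda>x. u n x - f x)) \<longlonglongrightarrow> 0"
  proof (rule order_tendstoI)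
    fix a :: real assume a: "0 < a"
    then obtain K where "\<forall>m\<ge>K. \<forall>n\<ge>K. Le_norm M E (\<lambda>x. u m x - u n x) < a / 2"
      using Cauchy by (meson half_gt_zero)
    then show "eventually (\<lambda>n. Le_norm M E (\<lambda>x. u n x - f x) < a) sequentially"
      using near[of "a / 2" K] a unfolding eventually_sequentially by force
  next
    fix a :: real assume "a < 0"
    then show "eventually (\<lambda>n. a < Le_norm M E (\<lambda>x. u n x - f x)) sequentially"
      using Le_norm_nonneg[OF ME_diff[OF u fME]] by (intro always_eventually allI) (auto intro: less_le_trans)
  qed
  with fME show ?thesis by blast
qed

lemma is_banach_iff_trivial_kernel: "is_banach M E \<longleftrightarrow> trivial_kernel M E"
proof
  show "is_banach M E \<Longrightarrow> trivial_kernel M E"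
    unfolding is_banach_def Let_def trivial_kernel_def by blast
  show "trivial_kernel M E \<Longrightarrow> is_banach M E"
    unfolding is_banach_def Let_def
    using ME_add Le_norm_triangle ME_cmult Le_norm_cmult complete_if_trivial_kernel
    by (auto simp: trivial_kernel_def)
qed

end

theorem theorem4p8:
  fixes M :: "'a measure" and E :: "('a \<Rightarrow> real) \<Rightarrow> ennreal"
  assumes "sigma_finite_measure M"
    and "nonlinear_dirichlet_form M E"
  shows "(trivial_kernel M E \<longleftrightarrow> is_banach M E)
       \<and> (trivial_kernel M E \<longleftrightarrow> embedding_continuous M E)
       \<and> (trivial_kernel M E \<longleftrightarrow>
            (\<exists>w p. admissible_weight M w \<and> 1 \<le> p \<and> weighted_estimate M E w p))
       \<and> (trivial_kernel M E \<longleftrightarrow>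
            (\<forall>w p. admissible_weight M w \<and> 1 \<le> p \<longrightarrow> weighted_estimate M E w p))"
proof -
  interpret sigma_finite_nonlinear_dirichlet M E
    using assms by (simp add: sigma_finite_nonlinear_dirichlet_def nonlinear_dirichlet_def)
  obtain w where w: "admissible_weight M w" by (rule admissible_weight_exists)
  show ?thesis
  proof (intro conjI)
    show "trivial_kernel M E \<longleftrightarrow> is_banach M E"
      using is_banach_iff_trivial_kernel by simp
    show "trivial_kernel M E \<longleftrightarrow> embedding_continuous M E"
      using embedding_continuous_if_trivial_kernel trivial_kernel_if_embedding_continuous by blast
    show "trivial_kernel M E \<longleftrightarrow> (\<exists>w p. admissible_weight M w \<and> 1 \<le> p \<and> weighted_estimate M E w p)"
      using weighted_estimate_if_trivial_kernel[OF _ w order_refl] trivial_kernel_if_weighted_estimate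
        w by blast
    show "trivial_kernel M E \<longleftrightarrow> (\<forall>w p. admissible_weight M w \<and> 1 \<le> p \<longrightarrow> weighted_estimate M E w p)"
      using weighted_estimate_if_trivial_kernel trivial_kernel_if_weighted_estimate[OF w order_refl]
        w by blast
  qed
qed

end
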